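(* Suppose that $\mathcal A\subseteq\mathcal{Q}(\ell_2)$ is a masa of $\mathcal{Q}(\ell_2)$ which has a commutative lift. Then $\mathcal A=\pi[\mathcal B']$ for some masa $\mathcal B'$ of $\mathcal B(\ell_2)$.
   Context: $\pi:\mathcal B(\ell_2)\to\mathcal{Q}(\ell_2)=\mathcal B(\ell_2)/\mathcal K(\ell_2)$ is the Calkin quotient map. A masa is a maximal commutative C*-subalgebra. $\mathcal A\subseteq\mathcal{Q}(\ell_2)$ has a commutative lift if $\pi[\mathcal B]=\mathcal A$ for some commutative C*-subalgebra $\mathcal B\subseteq\mathcal B(\ell_2)$. *)

theory Defs
  imports Complex_Main
begin

definition l2 :: "(nat \<Rightarrow> complex) set" where
  "l2 = {x. summable (\<lambda>n. (cmod (x n))^2)}"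

definition vnorm :: "(nat \<Rightarrow> complex) \<Rightarrow> real" where
  "vnorm x = sqrt (\<Sum>n. (cmod (x n))^2)"

definition inner2 :: "(nat \<Rightarrow> complex) \<Rightarrow> (nat \<Rightarrow> complex) \<Rightarrow> complex" where
  "inner2 x y = (\<Sum>n. x n * cnj (y n))"

definition vdiff :: "(nat \<Rightarrow> complex) \<Rightarrow> (nat \<Rightarrow> complex) \<Rightarrow> (nat \<Rightarrow> complex)" where
  "vdiff x y = (\<lambda>n. x n - y n)"

type_synonym l2op = "(nat \<Rightarrow> complex) \<Rightarrow> (nat \<Rightarrow> complex)"

text \<open>A bounded linear operator on ell_2, represented canonically as a function that
  is zero outside ell_2 (so equality of operators is extensional equality).\<close>
definition bounded_op :: "l2op \<Rightarrow> bool" where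
  "bounded_op T \<longleftrightarrow>
     (\<forall>x\<in>l2. T x \<in> l2) \<and>
     (\<forall>x\<in>l2. \<forall>y\<in>l2. \<forall>c. T (\<lambda>n. c * x n + y n) = (\<lambda>n. c * T x n + T y n)) \<and>
     (\<exists>K. \<forall>x\<in>l2. vnorm (T x) \<le> K * vnorm x) \<and>
     (\<forall>x. x \<notin> l2 \<longrightarrow> T x = (\<lambda>_. 0))"

definition BL :: "l2op set" where
  "BL = {T. bounded_op T}"

definition op_zero :: l2op where "op_zero = (\<lambda>x n. 0)"
definition op_add :: "l2op \<Rightarrow> l2op \<Rightarrow> l2op" where "op_add T S = (\<lambda>x n. T x n + S x n)"
definition op_scale :: "complex \<Rightarrow> l2op \<Rightarrow> l2op" where "op_scale c T = (\<lambda>x n. c * T x n)"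
definition op_mul :: "l2op \<Rightarrow> l2op \<Rightarrow> l2op" where "op_mul T S = T \<circ> S"

definition op_adj :: "l2op \<Rightarrow> l2op" where
  "op_adj T = (THE S. S \<in> BL \<and> (\<forall>x\<in>l2. \<forall>y\<in>l2. inner2 (T x) y = inner2 x (S y)))"

definition op_norm :: "l2op \<Rightarrow> real" where
  "op_norm T = Sup {vnorm (T x) | x. x \<in> l2 \<and> vnorm x \<le> 1}"

text \<open>Compact operators: the image of the unit ball is relatively compact, i.e. every
  sequence in the unit ball has a subsequence whose image is Cauchy.\<close>
definition compact_l2op :: "l2op \<Rightarrow> bool" where
  "compact_l2op T \<longleftrightarrow> T \<in> BL \<and>
     (\<forall>xs::nat \<Rightarrow> nat \<Rightarrow> complex. (\<forall>k. xs k \<in> l2 \<and> vnorm (xs k) \<le> 1) \<longrightarrow>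
        (\<exists>r::nat \<Rightarrow> nat. strict_mono r \<and>
           (\<forall>e>0. \<exists>N::nat. \<forall>m\<ge>N. \<forall>n\<ge>N. vnorm (vdiff (T (xs (r m))) (T (xs (r n)))) < e)))"

text \<open>Elements of the Calkin algebra are cosets T + K(ell_2); calkin is the quotient map pi.\<close>
definition calkin :: "l2op \<Rightarrow> l2op set" where
  "calkin T = {S \<in> BL. compact_l2op (op_add S (op_scale (-1) T))}"

definition QC :: "l2op set set" where
  "QC = calkin ` BL"

definition rep :: "l2op set \<Rightarrow> l2op" where "rep a = (SOME T. T \<in> a)"

definition q_zero :: "l2op set" where "q_zero = calkin op_zero"
definition q_add :: "l2op set \<Rightarrow> l2op set \<Rightarrow> l2op set" where
  "q_add a b = calkin (op_add (rep a) (rep b))"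
definition q_scale :: "complex \<Rightarrow> l2op set \<Rightarrow> l2op set" where
  "q_scale c a = calkin (op_scale c (rep a))"
definition q_mul :: "l2op set \<Rightarrow> l2op set \<Rightarrow> l2op set" where
  "q_mul a b = calkin (op_mul (rep a) (rep b))"
definition q_adj :: "l2op set \<Rightarrow> l2op set" where
  "q_adj a = calkin (op_adj (rep a))"
definition q_norm :: "l2op set \<Rightarrow> real" where
  "q_norm a = Inf (op_norm ` a)"

definition cstar_subalg ::
  "'a set \<Rightarrow> 'a \<Rightarrow> ('a \<Rightarrow> 'a \<Rightarrow> 'a) \<Rightarrow> (complex \<Rightarrow> 'a \<Rightarrow> 'a) \<Rightarrow> ('a \<Rightarrow> 'a \<Rightarrow> 'a)
     \<Rightarrow> ('a \<Rightarrow> 'a) \<Rightarrow> ('a \<Rightarrow> real) \<Rightarrow> 'a set \<Rightarrow> bool" where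
  "cstar_subalg U z add sc mul adj nrm A \<longleftrightarrow>
     A \<subseteq> U \<and> z \<in> A \<and>
     (\<forall>a\<in>A. \<forall>b\<in>A. add a b \<in> A \<and> mul a b \<in> A) \<and>
     (\<forall>c. \<forall>a\<in>A. sc c a \<in> A) \<and>
     (\<forall>a\<in>A. adj a \<in> A) \<and>
     (\<forall>X a. (\<forall>k. X k \<in> A) \<and> a \<in> U \<and> (\<lambda>k. nrm (add (X k) (sc (-1) a))) \<longlonglongrightarrow> 0
            \<longrightarrow> a \<in> A)"

definition comm_cstar_subalg where
  "comm_cstar_subalg U z add sc mul adj nrm A \<longleftrightarrow>
     cstar_subalg U z add sc mul adj nrm A \<and> (\<forall>a\<in>A. \<forall>b\<in>A. mul a b = mul b a)"

definition masa where
  "masa U z add sc mul adj nrm A \<longleftrightarrow>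
     comm_cstar_subalg U z add sc mul adj nrm A \<and>
     (\<forall>C. comm_cstar_subalg U z add sc mul adj nrm C \<and> A \<subseteq> C \<longrightarrow> C = A)"

abbreviation comm_subalg_B :: "l2op set \<Rightarrow> bool" where
  "comm_subalg_B \<equiv> comm_cstar_subalg BL op_zero op_add op_scale op_mul op_adj op_norm"
abbreviation masa_B :: "l2op set \<Rightarrow> bool" where
  "masa_B \<equiv> masa BL op_zero op_add op_scale op_mul op_adj op_norm"
abbreviation masa_Q :: "l2op set set \<Rightarrow> bool" where
  "masa_Q \<equiv> masa QC q_zero q_add q_scale q_mul q_adj q_norm"

definition has_commutative_lift :: "l2op set set \<Rightarrow> bool" where
  "has_commutative_lift A \<longleftrightarrow> (\<exists>B. comm_subalg_B B \<and> calkin ` B = A)"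

end

(* Extend the commutative lift B by Zorn's lemma to a maximal commutative self-adjoint set M of
   operators. Such an M equals its own bicommutant, which is a commutative C*-algebra, so M is a
   masa of B(l2). Its image pi[M] is a commutative self-adjoint subset of the Calkin algebra
   containing A. The bicommutant of pi[M] in Q(l2) is again a commutative C*-subalgebra: it is
   norm closed because commutation modulo compact operators passes to limits in the quotient norm.
   It contains A, hence equals A by maximality, and A is squeezed: A <= pi[M] <= A. *)

theory Submission
  imports Defs "HOL-Analysis.Analysis"
begin

section \<open>Commutants and masas\<close>

locale star_algebra =
  fixes U :: "'a set" and z :: 'a
    and add :: "'a \<Rightarrow> 'a \<Rightarrow> 'a" and sc :: "complex \<Rightarrow> 'a \<Rightarrow> 'a"
    and mul :: "'a \<Rightarrow> 'a \<Rightarrow> 'a" and adj :: "'a \<Rightarrow> 'a" and nrm :: "'a \<Rightarrow> real"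
  assumes zero_closed: "z \<in> U"
    and add_closed: "x \<in> U \<Longrightarrow> y \<in> U \<Longrightarrow> add x y \<in> U"
    and scale_closed: "x \<in> U \<Longrightarrow> sc c x \<in> U"
    and mul_closed: "x \<in> U \<Longrightarrow> y \<in> U \<Longrightarrow> mul x y \<in> U"
    and adj_closed: "x \<in> U \<Longrightarrow> adj x \<in> U"
    and mul_add_left: "x \<in> U \<Longrightarrow> y \<in> U \<Longrightarrow> w \<in> U \<Longrightarrow> mul (add x y) w = add (mul x w) (mul y w)"
    and mul_add_right: "x \<in> U \<Longrightarrow> y \<in> U \<Longrightarrow> w \<in> U \<Longrightarrow> mul x (add y w) = add (mul x y) (mul x w)"
    and mul_scale_left: "x \<in> U \<Longrightarrow> y \<in> U \<Longrightarrow> mul (sc c x) y = sc c (mul x y)"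
    and mul_scale_right: "x \<in> U \<Longrightarrow> y \<in> U \<Longrightarrow> mul x (sc c y) = sc c (mul x y)"
    and mul_assoc: "x \<in> U \<Longrightarrow> y \<in> U \<Longrightarrow> w \<in> U \<Longrightarrow> mul (mul x y) w = mul x (mul y w)"
    and mul_zero_left: "x \<in> U \<Longrightarrow> mul z x = z"
    and mul_zero_right: "x \<in> U \<Longrightarrow> mul x z = z"
    and adj_adj: "x \<in> U \<Longrightarrow> adj (adj x) = x"
    and adj_mul: "x \<in> U \<Longrightarrow> y \<in> U \<Longrightarrow> adj (mul x y) = mul (adj y) (adj x)"
    \<comment> \<open>the only analytic input: it makes commutants closed\<close>
    and commute_limit: "(\<And>k. X k \<in> U) \<Longrightarrow> x \<in> U \<Longrightarrow> y \<in> U \<Longrightarrow>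
       (\<And>k. mul (X k) y = mul y (X k)) \<Longrightarrow> (\<lambda>k. nrm (add (X k) (sc (-1) x))) \<longlonglongrightarrow> 0 \<Longrightarrow>
       mul x y = mul y x"
begin

definition commutant :: "'a set \<Rightarrow> 'a set" where
  "commutant Y = {a \<in> U. \<forall>b\<in>Y. mul a b = mul b a}"

definition comm_star_set :: "'a set \<Rightarrow> bool" where
  "comm_star_set Y \<longleftrightarrow> Y \<subseteq> U \<and> (\<forall>a\<in>Y. adj a \<in> Y) \<and> (\<forall>a\<in>Y. \<forall>b\<in>Y. mul a b = mul b a)"

lemma commutant_antimono: "Y \<subseteq> Y' \<Longrightarrow> commutant Y' \<subseteq> commutant Y"
  unfolding commutant_def by blast

lemma subset_bicommutant: "Y \<subseteq> U \<Longrightarrow> Y \<subseteq> commutant (commutant Y)"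
  unfolding commutant_def by auto

lemma comm_star_set_iff_subset_commutant:
  "comm_star_set Y \<longleftrightarrow> Y \<subseteq> commutant Y \<and> (\<forall>a\<in>Y. adj a \<in> Y)"
  unfolding comm_star_set_def commutant_def by blast

lemma commutant_add:
  assumes "a \<in> commutant Y" "a' \<in> commutant Y" "Y \<subseteq> U" shows "add a a' \<in> commutant Y"
  using assms unfolding commutant_def by (auto simp: add_closed mul_add_left mul_add_right subset_iff)

lemma commutant_scale: assumes "a \<in> commutant Y" "Y \<subseteq> U" shows "sc c a \<in> commutant Y"
  using assms unfolding commutant_def by (auto simp: scale_closed mul_scale_left mul_scale_right subset_iff)

lemma commutant_mul:
  assumes "a \<in> commutant Y" "a' \<in> commutant Y" "Y \<subseteq> U" shows "mul a a' \<in> commutant Y"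
  unfolding commutant_def
proof (intro CollectI conjI ballI)
  have U: "a \<in> U" "a' \<in> U" using assms unfolding commutant_def by auto
  then show "mul a a' \<in> U" by (rule mul_closed)
  fix b assume b: "b \<in> Y"
  then have bU: "b \<in> U" using assms by blast
  have ca: "mul a b = mul b a" and ca': "mul a' b = mul b a'"
    using assms b unfolding commutant_def by auto
  have "mul (mul a a') b = mul a (mul b a')" using U bU by (simp add: mul_assoc ca')
  also have "\<dots> = mul (mul b a) a'" using U bU by (simp add: mul_assoc[symmetric] ca)
  also have "\<dots> = mul b (mul a a')" by (rule mul_assoc[OF bU U])
  finally show "mul (mul a a') b = mul b (mul a a')" .
qed

lemma commutant_adj:
  assumes "a \<in> commutant Y" "Y \<subseteq> U" and adj_Y: "\<And>b. b \<in> Y \<Longrightarrow> adj b \<in> Y"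
  shows "adj a \<in> commutant Y"
  unfolding commutant_def
proof (intro CollectI conjI ballI)
  have aU: "a \<in> U" using assms unfolding commutant_def by auto
  then show "adj a \<in> U" by (rule adj_closed)
  fix b assume b: "b \<in> Y"
  then have bU: "b \<in> U" using assms by blast
  have "mul (adj a) b = adj (mul (adj b) a)" using aU bU by (simp add: adj_mul adj_closed adj_adj)
  also have "\<dots> = adj (mul a (adj b))" using assms(1) adj_Y[OF b] by (simp add: commutant_def)
  also have "\<dots> = mul b (adj a)" using aU bU by (simp add: adj_mul adj_closed adj_adj)
  finally show "mul (adj a) b = mul b (adj a)" .
qed

lemma cstar_subalg_commutant:
  assumes Y: "Y \<subseteq> U" and adj_Y: "\<And>b. b \<in> Y \<Longrightarrow> adj b \<in> Y"
  shows "cstar_subalg U z add sc mul adj nrm (commutant Y)"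
  unfolding cstar_subalg_def
proof (intro conjI ballI allI impI)
  show "commutant Y \<subseteq> U" unfolding commutant_def by blast
  show "z \<in> commutant Y"
    using Y unfolding commutant_def by (auto simp: zero_closed mul_zero_left mul_zero_right)
  fix a a' c assume "a \<in> commutant Y" "a' \<in> commutant Y"
  then show "add a a' \<in> commutant Y" "mul a a' \<in> commutant Y" "sc c a \<in> commutant Y"
    "adj a \<in> commutant Y"
    using Y adj_Y by (simp_all add: commutant_add commutant_mul commutant_scale commutant_adj)
next
  fix X a assume lim: "(\<forall>k. X k \<in> commutant Y) \<and> a \<in> U \<and> (\<lambda>k. nrm (add (X k) (sc (-1) a))) \<longlonglongrightarrow> 0"
  have "mul a b = mul b a" if b: "b \<in> Y" for b
  proof (rule commute_limit[of X])
    show "X k \<in> U" "mul (X k) b = mul b (X k)" for k using lim b by (auto simp: commutant_def)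
  qed (use lim b Y in auto)
  then show "a \<in> commutant Y" using lim unfolding commutant_def by blast
qed

lemma comm_cstar_subalg_bicommutant:
  assumes "comm_star_set Y"
  shows "comm_cstar_subalg U z add sc mul adj nrm (commutant (commutant Y))"
proof -
  have Y: "Y \<subseteq> U" "\<And>b. b \<in> Y \<Longrightarrow> adj b \<in> Y" using assms unfolding comm_star_set_def by auto
  have C: "cstar_subalg U z add sc mul adj nrm (commutant Y)"
    using Y by (rule cstar_subalg_commutant)
  then have "commutant Y \<subseteq> U" "\<And>b. b \<in> commutant Y \<Longrightarrow> adj b \<in> commutant Y"
    unfolding cstar_subalg_def by auto
  then have "cstar_subalg U z add sc mul adj nrm (commutant (commutant Y))"
    by (rule cstar_subalg_commutant)
  moreover have "commutant (commutant Y) \<subseteq> commutant Y"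
    using assms by (intro commutant_antimono) (auto simp: comm_star_set_iff_subset_commutant)
  ultimately show ?thesis
    unfolding comm_cstar_subalg_def commutant_def[of "commutant Y"] by blast
qed

lemma comm_cstar_subalg_imp_comm_star_set:
  assumes "comm_cstar_subalg U z add sc mul adj nrm Y" shows "comm_star_set Y"
proof -
  have "cstar_subalg U z add sc mul adj nrm Y" "\<forall>a\<in>Y. \<forall>b\<in>Y. mul a b = mul b a"
    using assms unfolding comm_cstar_subalg_def by auto
  then show ?thesis unfolding cstar_subalg_def comm_star_set_def by auto
qed

lemma masaD:
  "masa U z add sc mul adj nrm A \<Longrightarrow> comm_cstar_subalg U z add sc mul adj nrm C \<Longrightarrow> A \<subseteq> C \<Longrightarrow> C = A"
  unfolding masa_def by blast

lemma masa_eq_comm_star_superset: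
  assumes "masa U z add sc mul adj nrm A" "A \<subseteq> Y" "comm_star_set Y"
  shows "Y = A"
proof -
  have Y: "Y \<subseteq> commutant (commutant Y)"
    using assms(3) by (intro subset_bicommutant) (simp add: comm_star_set_def)
  then have "commutant (commutant Y) = A"
    using assms(2) by (intro masaD[OF assms(1) comm_cstar_subalg_bicommutant[OF assms(3)]]) blast
  then show ?thesis using assms(2) Y by blast
qed

lemma masa_if_maximal_comm_star_set:
  assumes "comm_star_set M" and max: "\<And>Y. comm_star_set Y \<Longrightarrow> M \<subseteq> Y \<Longrightarrow> Y = M"
  shows "masa U z add sc mul adj nrm M"
proof -
  have bicomm: "comm_cstar_subalg U z add sc mul adj nrm (commutant (commutant M))"
    using assms(1) by (rule comm_cstar_subalg_bicommutant)
  have "M \<subseteq> commutant (commutant M)"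
    using assms(1) by (intro subset_bicommutant) (simp add: comm_star_set_def)
  then have "commutant (commutant M) = M"
    using max comm_cstar_subalg_imp_comm_star_set[OF bicomm] by blast
  then have "comm_cstar_subalg U z add sc mul adj nrm M" using bicomm by simp
  then show ?thesis
    unfolding masa_def using max comm_cstar_subalg_imp_comm_star_set by blast
qed

lemma comm_star_set_Union_chain:
  assumes "\<And>Y. Y \<in> C \<Longrightarrow> comm_star_set Y" and chain: "\<And>Y Y'. Y \<in> C \<Longrightarrow> Y' \<in> C \<Longrightarrow> Y \<subseteq> Y' \<or> Y' \<subseteq> Y"
  shows "comm_star_set (\<Union>C)"
  unfolding comm_star_set_def
proof (intro conjI ballI)
  show "\<Union>C \<subseteq> U" "\<And>a. a \<in> \<Union>C \<Longrightarrow> adj a \<in> \<Union>C"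
    using assms(1) unfolding comm_star_set_def by blast+
  fix a b assume "a \<in> \<Union>C" "b \<in> \<Union>C"
  then obtain Y Y' where YY': "Y \<in> C" "Y' \<in> C" "a \<in> Y" "b \<in> Y'" by blast
  then have "a \<in> Y \<and> b \<in> Y \<or> a \<in> Y' \<and> b \<in> Y'" using chain[OF YY'(1,2)] by blast
  then show "mul a b = mul b a"
    using assms(1)[OF YY'(1)] assms(1)[OF YY'(2)] unfolding comm_star_set_def by blast
qed

lemma comm_cstar_subalg_extends_to_masa:
  assumes "comm_cstar_subalg U z add sc mul adj nrm B"
  shows "\<exists>M. masa U z add sc mul adj nrm M \<and> B \<subseteq> M"
proof -
  let ?F = "{Y. B \<subseteq> Y \<and> comm_star_set Y}"
  have "\<exists>M\<in>?F. \<forall>Y\<in>?F. M \<subseteq> Y \<longrightarrow> Y = M"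
  proof (rule subset_Zorn_nonempty)
    show "?F \<noteq> {}" using comm_cstar_subalg_imp_comm_star_set[OF assms] by blast
    fix C assume C: "C \<noteq> {}" "subset.chain ?F C"
    have CF: "C \<subseteq> ?F" and chain: "\<forall>Y\<in>C. \<forall>Y'\<in>C. Y \<subseteq> Y' \<or> Y' \<subseteq> Y"
      using C(2) unfolding subset_chain_def by blast+
    have "comm_star_set (\<Union>C)"
    proof (rule comm_star_set_Union_chain)
      show "comm_star_set Y" if "Y \<in> C" for Y using subsetD[OF CF that] by simp
      show "Y \<subseteq> Y' \<or> Y' \<subseteq> Y" if "Y \<in> C" "Y' \<in> C" for Y Y' using chain that by metis
    qed
    moreover have "B \<subseteq> \<Union>C" using C(1) CF by blast
    ultimately show "\<Union>C \<in> ?F" by blast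
  qed
  then obtain M where M: "B \<subseteq> M" "comm_star_set M" and max: "\<forall>Y\<in>?F. M \<subseteq> Y \<longrightarrow> Y = M"
    by auto
  have "masa U z add sc mul adj nrm M"
  proof (rule masa_if_maximal_comm_star_set[OF M(2)])
    show "Y = M" if "comm_star_set Y" "M \<subseteq> Y" for Y using max that M(1) by auto
  qed
  then show ?thesis using M(1) by blast
qed

end

section \<open>The sequence space l2\<close>

lemma l2_lincomb[simp,intro]: assumes "x \<in> l2" "y \<in> l2" shows "(\<lambda>n. c * x n + y n) \<in> l2"
proof -
  have S: "summable (\<lambda>n. 2 * (cmod c)^2 * (cmod (x n))^2 + 2 * (cmod (y n))^2)"
    using assms unfolding l2_def by (intro summable_add summable_mult) auto
  have "norm ((cmod (c * x n + y n))^2) \<le> 2 * (cmod c)^2 * (cmod (x n))^2 + 2 * (cmod (y n))^2" for n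
  proof -
    have "cmod (c * x n + y n) \<le> cmod c * cmod (x n) + cmod (y n)"
      by (metis norm_mult norm_triangle_ineq)
    then have "(cmod (c * x n + y n))^2 \<le> (cmod c * cmod (x n) + cmod (y n))^2"
      by (simp add: power_mono)
    also have "\<dots> \<le> 2 * (cmod c * cmod (x n))^2 + 2 * (cmod (y n))^2"
      using sum_squares_bound[of "cmod c * cmod (x n)" "cmod (y n)"] by (simp add: power2_sum)
    finally show ?thesis by (simp add: power_mult_distrib)
  qed
  then have "summable (\<lambda>n. (cmod (c * x n + y n))^2)"
    by (intro summable_comparison_test'[OF S, of 0]) auto
  then show ?thesis unfolding l2_def by simp
qed

lemma l2_zero[simp,intro]: "(\<lambda>n. 0) \<in> l2"
  by (simp add: l2_def)

lemma l2_add[simp,intro]: "x \<in> l2 \<Longrightarrow> y \<in> l2 \<Longrightarrow> (\<lambda>n. x n + y n) \<in> l2"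
  using l2_lincomb[of x y 1] by simp

lemma l2_scale[simp,intro]: "x \<in> l2 \<Longrightarrow> (\<lambda>n. c * x n) \<in> l2"
  using l2_lincomb[of x "\<lambda>n. 0" c] by simp

lemma l2_uminus[simp,intro]: "x \<in> l2 \<Longrightarrow> (\<lambda>n. - x n) \<in> l2"
  using l2_scale[of x "-1"] by simp

lemma l2_diff[simp,intro]: "x \<in> l2 \<Longrightarrow> y \<in> l2 \<Longrightarrow> (\<lambda>n. x n - y n) \<in> l2"
  using l2_lincomb[of y x "-1"] by simp

lemma l2_summable: "x \<in> l2 \<Longrightarrow> summable (\<lambda>n. (cmod (x n))^2)"
  by (simp add: l2_def)

lemma vnorm_nonneg[simp]: assumes "x \<in> l2" shows "0 \<le> vnorm x"
  using assms by (simp add: vnorm_def l2_def suminf_nonneg)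

lemma vnorm_square: assumes "x \<in> l2" shows "(vnorm x)^2 = (\<Sum>n. (cmod (x n))^2)"
  using assms by (simp add: vnorm_def l2_def suminf_nonneg)

lemma vnorm_eq_0_iff: assumes "x \<in> l2" shows "vnorm x = 0 \<longleftrightarrow> x = (\<lambda>n. 0)"
proof
  assume "vnorm x = 0"
  then have "(\<Sum>n. (cmod (x n))^2) = 0" using vnorm_square[OF assms] by simp
  then have "\<forall>n. (cmod (x n))^2 = 0"
    using suminf_eq_zero_iff[OF l2_summable[OF assms] zero_le_power2] by blast
  then show "x = (\<lambda>n. 0)" by auto
qed (simp add: vnorm_def)

lemma vnorm_zero[simp]: "vnorm (\<lambda>n. 0) = 0"
  by (simp add: vnorm_def)

lemma vnorm_scale: assumes "x \<in> l2" shows "vnorm (\<lambda>n. c * x n) = cmod c * vnorm x"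
proof -
  have "(\<Sum>n. (cmod (c * x n))^2) = (cmod c)^2 * (\<Sum>n. (cmod (x n))^2)"
    unfolding norm_mult power_mult_distrib by (rule suminf_mult) (rule l2_summable[OF assms])
  then show ?thesis unfolding vnorm_def by (simp add: real_sqrt_mult)
qed

lemma L2_set_le_vnorm: assumes "x \<in> l2" shows "L2_set (\<lambda>n. cmod (x n)) {..<N} \<le> vnorm x"
  unfolding L2_set_def vnorm_def using assms by (intro real_sqrt_le_mono sum_le_suminf) (auto simp: l2_def)

lemma l2_vnorm_le_if_L2_set_le:
  assumes bound: "\<And>N. L2_set (\<lambda>n. cmod (x n)) {..<N} \<le> C"
  shows "x \<in> l2" and "vnorm x \<le> C"
proof -
  have C: "0 \<le> C" using bound[of 0] by simp
  have partial: "(\<Sum>n<N. (cmod (x n))^2) \<le> C^2" for N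
    using bound[of N] unfolding L2_set_def by (rule sqrt_le_D)
  have summable: "summable (\<lambda>n. (cmod (x n))^2)"
    by (rule summableI_nonneg_bounded[where x="C^2"]) (use partial in auto)
  then show "x \<in> l2" unfolding l2_def by simp
  have "(\<Sum>n. (cmod (x n))^2) \<le> C^2" by (rule suminf_le_const[OF summable partial])
  then show "vnorm x \<le> C" unfolding vnorm_def using C real_le_lsqrt by metis
qed

lemma vnorm_triangle: assumes "x \<in> l2" "y \<in> l2"
  shows "vnorm (\<lambda>n. x n + y n) \<le> vnorm x + vnorm y"
proof (rule l2_vnorm_le_if_L2_set_le(2))
  fix N
  have "L2_set (\<lambda>n. cmod (x n + y n)) {..<N} \<le> L2_set (\<lambda>n. cmod (x n) + cmod (y n)) {..<N}"
    by (intro L2_set_mono norm_triangle_ineq) auto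
  also have "\<dots> \<le> L2_set (\<lambda>n. cmod (x n)) {..<N} + L2_set (\<lambda>n. cmod (y n)) {..<N}"
    by (rule L2_set_triangle_ineq)
  also have "\<dots> \<le> vnorm x + vnorm y" using assms by (intro add_mono L2_set_le_vnorm)
  finally show "L2_set (\<lambda>n. cmod (x n + y n)) {..<N} \<le> vnorm x + vnorm y" .
qed

lemma summable_cmod_mult: assumes "x \<in> l2" "y \<in> l2" shows "summable (\<lambda>n. cmod (x n) * cmod (y n))"
proof -
  have "summable (\<lambda>n. (cmod (x n))^2 + (cmod (y n))^2)"
    using assms by (intro summable_add) (auto simp: l2_def)
  moreover have "norm (cmod (x n) * cmod (y n)) \<le> (cmod (x n))^2 + (cmod (y n))^2" for n
  proof -
    have "2 * (cmod (x n) * cmod (y n)) \<le> (cmod (x n))^2 + (cmod (y n))^2"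
      using sum_squares_bound[of "cmod (x n)" "cmod (y n)"] by (simp add: mult.assoc)
    moreover have "norm (cmod (x n) * cmod (y n)) = cmod (x n) * cmod (y n)" by simp
    moreover have "0 \<le> cmod (x n) * cmod (y n)" by simp
    ultimately show ?thesis by linarith
  qed
  ultimately show ?thesis by (rule summable_comparison_test'[of _ 0])
qed

lemma suminf_cmod_mult_le: assumes "x \<in> l2" "y \<in> l2"
  shows "(\<Sum>n. cmod (x n) * cmod (y n)) \<le> vnorm x * vnorm y"
proof (rule suminf_le_const[OF summable_cmod_mult[OF assms]])
  fix N
  have "(\<Sum>n<N. cmod (x n) * cmod (y n))
      \<le> L2_set (\<lambda>n. cmod (x n)) {..<N} * L2_set (\<lambda>n. cmod (y n)) {..<N}"
    using L2_set_mult_ineq[of "\<lambda>n. cmod (x n)" "\<lambda>n. cmod (y n)" "{..<N}"] by simp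
  also have "\<dots> \<le> vnorm x * vnorm y"
    using assms by (intro mult_mono L2_set_le_vnorm) auto
  finally show "(\<Sum>n<N. cmod (x n) * cmod (y n)) \<le> vnorm x * vnorm y" .
qed

lemma inner2_summable_norm: assumes "x \<in> l2" "y \<in> l2" shows "summable (\<lambda>n. norm (x n * cnj (y n)))"
  using summable_cmod_mult[OF assms] by (simp add: norm_mult)

lemma inner2_summable: assumes "x \<in> l2" "y \<in> l2" shows "summable (\<lambda>n. x n * cnj (y n))"
  using inner2_summable_norm[OF assms] by (rule summable_norm_cancel)

lemma inner2_Cauchy_Schwarz: assumes "x \<in> l2" "y \<in> l2" shows "cmod (inner2 x y) \<le> vnorm x * vnorm y"
proof -
  have "cmod (inner2 x y) \<le> (\<Sum>n. norm (x n * cnj (y n)))"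
    unfolding inner2_def by (rule summable_norm[OF inner2_summable_norm[OF assms]])
  also have "\<dots> = (\<Sum>n. cmod (x n) * cmod (y n))" by (simp add: norm_mult)
  also have "\<dots> \<le> vnorm x * vnorm y" by (rule suminf_cmod_mult_le[OF assms])
  finally show ?thesis .
qed

lemma inner2_self: assumes "x \<in> l2" shows "inner2 x x = complex_of_real ((vnorm x)^2)"
proof -
  have e: "x n * cnj (x n) = complex_of_real ((cmod (x n))^2)" for n
    by (simp only: complex_norm_square)
  have "inner2 x x = (\<Sum>n. complex_of_real ((cmod (x n))^2))"
    unfolding inner2_def by (simp only: e)
  also have "\<dots> = complex_of_real (\<Sum>n. (cmod (x n))^2)"
    using assms by (simp add: l2_def suminf_of_real)
  finally show ?thesis using vnorm_square[OF assms] by simp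
qed

lemma inner2_lincomb_left: assumes "x \<in> l2" "y \<in> l2" "z \<in> l2"
  shows "inner2 (\<lambda>n. c * x n + y n) z = c * inner2 x z + inner2 y z"
proof -
  have "inner2 (\<lambda>n. c * x n + y n) z = (\<Sum>n. c * (x n * cnj (z n)) + y n * cnj (z n))"
    unfolding inner2_def by (simp add: algebra_simps)
  also have "\<dots> = (\<Sum>n. c * (x n * cnj (z n))) + (\<Sum>n. y n * cnj (z n))"
    using inner2_summable[OF assms(1,3)] inner2_summable[OF assms(2,3)]
    by (intro suminf_add[symmetric] summable_mult) auto
  also have "\<dots> = c * inner2 x z + inner2 y z"
    unfolding inner2_def using inner2_summable[OF assms(1,3)] by (simp add: suminf_mult)
  finally show ?thesis .
qed

lemma inner2_cnj_swap: assumes "x \<in> l2" "y \<in> l2" shows "inner2 y x = cnj (inner2 x y)"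
proof -
  have "(\<lambda>n. x n * cnj (y n)) sums inner2 x y"
    unfolding inner2_def using inner2_summable[OF assms] by (simp add: summable_sums)
  then have "(\<lambda>n. cnj (x n * cnj (y n))) sums cnj (inner2 x y)" by (simp only: sums_cnj)
  then have "(\<lambda>n. y n * cnj (x n)) sums cnj (inner2 x y)" by (simp add: mult.commute)
  then show ?thesis unfolding inner2_def by (simp add: sums_iff)
qed

lemma inner2_lincomb_right: assumes "x \<in> l2" "y \<in> l2" "z \<in> l2"
  shows "inner2 z (\<lambda>n. c * x n + y n) = cnj c * inner2 z x + inner2 z y"
proof -
  have "inner2 z (\<lambda>n. c * x n + y n) = cnj (inner2 (\<lambda>n. c * x n + y n) z)"
    using assms by (intro inner2_cnj_swap) auto
  also have "\<dots> = cnj (c * inner2 x z + inner2 y z)" using inner2_lincomb_left[OF assms, of c] by simp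
  also have "\<dots> = cnj c * cnj (inner2 x z) + cnj (inner2 y z)" by simp
  also have "\<dots> = cnj c * inner2 z x + inner2 z y"
    using inner2_cnj_swap[OF assms(3,1)] inner2_cnj_swap[OF assms(3,2)] by simp
  finally show ?thesis .
qed

lemma inner2_zero_left[simp]: "inner2 (\<lambda>n. 0) y = 0"
  by (simp add: inner2_def)
lemma inner2_zero_right[simp]: "inner2 y (\<lambda>n. 0) = 0"
  by (simp add: inner2_def)

section \<open>Bounded operators\<close>

lemma op_add_apply[simp]: "op_add T S x = (\<lambda>n. T x n + S x n)" by (simp add: op_add_def)
lemma op_scale_apply[simp]: "op_scale c T x = (\<lambda>n. c * T x n)" by (simp add: op_scale_def)
lemma op_mul_apply[simp]: "op_mul T S x = T (S x)" by (simp add: op_mul_def)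
lemma op_zero_apply[simp]: "op_zero x = (\<lambda>n. 0)" by (simp add: op_zero_def)

lemma BL_l2[simp,intro]: "T \<in> BL \<Longrightarrow> x \<in> l2 \<Longrightarrow> T x \<in> l2"
  unfolding BL_def bounded_op_def by blast
lemma BL_outside: "T \<in> BL \<Longrightarrow> x \<notin> l2 \<Longrightarrow> T x = (\<lambda>_. 0)"
  unfolding BL_def bounded_op_def by blast
lemma BL_lincomb: "T \<in> BL \<Longrightarrow> x \<in> l2 \<Longrightarrow> y \<in> l2 \<Longrightarrow> T (\<lambda>n. c * x n + y n) = (\<lambda>n. c * T x n + T y n)"
  unfolding BL_def bounded_op_def by blast
lemma BL_boundE: assumes "T \<in> BL" obtains K where "K \<ge> 0" "\<And>x. x \<in> l2 \<Longrightarrow> vnorm (T x) \<le> K * vnorm x"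
proof -
  obtain K where K: "\<And>x. x \<in> l2 \<Longrightarrow> vnorm (T x) \<le> K * vnorm x"
    using assms unfolding BL_def bounded_op_def by blast
  have "vnorm (T x) \<le> max K 0 * vnorm x" if "x \<in> l2" for x
  proof -
    have "K * vnorm x \<le> max K 0 * vnorm x" using that by (intro mult_right_mono) auto
    then show ?thesis using K[OF that] by linarith
  qed
  then show ?thesis using that[of "max K 0"] by auto
qed

lemma BL_apply_zero[simp]: assumes "T \<in> BL" shows "T (\<lambda>n. 0) = (\<lambda>n. 0)"
proof -
  have "T (\<lambda>n. (-1) * 0 + 0) = (\<lambda>n. (-1) * T (\<lambda>n. 0) n + T (\<lambda>n. 0) n)"
    using BL_lincomb[OF assms, of "\<lambda>n. 0" "\<lambda>n. 0" "-1"] by simp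
  then show ?thesis by simp
qed

lemma BL_apply_add: "T \<in> BL \<Longrightarrow> x \<in> l2 \<Longrightarrow> y \<in> l2 \<Longrightarrow> T (\<lambda>n. x n + y n) = (\<lambda>n. T x n + T y n)"
  using BL_lincomb[of T x y 1] by simp
lemma BL_apply_scale: "T \<in> BL \<Longrightarrow> x \<in> l2 \<Longrightarrow> T (\<lambda>n. c * x n) = (\<lambda>n. c * T x n)"
  using BL_lincomb[of T x "\<lambda>n. 0" c] by simp
lemma BL_apply_diff: "T \<in> BL \<Longrightarrow> x \<in> l2 \<Longrightarrow> y \<in> l2 \<Longrightarrow> T (\<lambda>n. x n - y n) = (\<lambda>n. T x n - T y n)"
  using BL_lincomb[of T y x "-1"] by simp

lemma vnorm_le_0_imp_zero: "x \<in> l2 \<Longrightarrow> vnorm x \<le> 0 \<Longrightarrow> x = (\<lambda>n. 0)"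
  using vnorm_nonneg vnorm_eq_0_iff by (metis order_antisym)

lemma vnorm_diff_triangle: "x \<in> l2 \<Longrightarrow> y \<in> l2 \<Longrightarrow> vnorm (\<lambda>n. x n - y n) \<le> vnorm x + vnorm y"
proof -
  assume a: "x \<in> l2" "y \<in> l2"
  have "vnorm (\<lambda>n. x n + (-1) * y n) \<le> vnorm x + vnorm (\<lambda>n. (-1) * y n)"
    using a by (intro vnorm_triangle) auto
  also have "vnorm (\<lambda>n. (-1) * y n) = vnorm y" using vnorm_scale[OF a(2), of "-1"] by simp
  finally show ?thesis by simp
qed

lemma op_norm_bdd_above: assumes "T \<in> BL" shows "bdd_above {vnorm (T x) | x. x \<in> l2 \<and> vnorm x \<le> 1}"
proof -
  obtain K where K: "K \<ge> 0" "\<And>x. x \<in> l2 \<Longrightarrow> vnorm (T x) \<le> K * vnorm x" using BL_boundE[OF assms] by blast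
  have "vnorm (T x) \<le> K" if "x \<in> l2" "vnorm x \<le> 1" for x
  proof -
    have "K * vnorm x \<le> K * 1" using that K by (intro mult_left_mono) auto
    then show ?thesis using K(2)[OF that(1)] by simp
  qed
  then show ?thesis unfolding bdd_above_def by blast
qed

lemma op_norm_upper: assumes "T \<in> BL" "x \<in> l2" "vnorm x \<le> 1" shows "vnorm (T x) \<le> op_norm T"
  unfolding op_norm_def using assms by (intro cSup_upper op_norm_bdd_above) auto

lemma op_norm_nonneg[simp]: assumes "T \<in> BL" shows "0 \<le> op_norm T"
  using op_norm_upper[OF assms l2_zero] assms by simp

lemma op_norm_bound: assumes "T \<in> BL" "x \<in> l2" shows "vnorm (T x) \<le> op_norm T * vnorm x"
proof (cases "vnorm x = 0")
  case True
  then have "x = (\<lambda>n. 0)" using vnorm_eq_0_iff[OF assms(2)] by simp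
  then show ?thesis using assms by simp
next
  case False
  then have pos: "vnorm x > 0" using vnorm_nonneg[OF assms(2)] by linarith
  define u where "u = (\<lambda>n. complex_of_real (1 / vnorm x) * x n)"
  have u: "u \<in> l2" unfolding u_def by (rule l2_scale[OF assms(2)])
  have vu0: "vnorm u = cmod (complex_of_real (1 / vnorm x)) * vnorm x"
    unfolding u_def by (rule vnorm_scale[OF assms(2)])
  have vu: "vnorm u = 1" using vu0 pos by (simp add: norm_divide)
  have Tu: "T u = (\<lambda>n. complex_of_real (1 / vnorm x) * T x n)" unfolding u_def by (rule BL_apply_scale[OF assms])
  have "vnorm (T u) = cmod (complex_of_real (1 / vnorm x)) * vnorm (T x)"
    unfolding Tu by (rule vnorm_scale) (use assms in simp)
  then have "vnorm (T u) = (1 / vnorm x) * vnorm (T x)" using pos by (simp add: norm_divide)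
  moreover have "vnorm (T u) \<le> op_norm T" using op_norm_upper[OF assms(1) u] vu by simp
  ultimately have "(1 / vnorm x) * vnorm (T x) \<le> op_norm T" by simp
  then show ?thesis using pos by (simp add: field_simps)
qed

lemma op_norm_least: assumes "0 \<le> K" "\<And>x. x \<in> l2 \<Longrightarrow> vnorm (T x) \<le> K * vnorm x" shows "op_norm T \<le> K"
  unfolding op_norm_def
proof (rule cSup_least)
  show "{vnorm (T x) |x. x \<in> l2 \<and> vnorm x \<le> 1} \<noteq> {}" using l2_zero by fastforce
  fix v assume "v \<in> {vnorm (T x) |x. x \<in> l2 \<and> vnorm x \<le> 1}"
  then obtain x where x: "x \<in> l2" "vnorm x \<le> 1" "v = vnorm (T x)" by blast
  then have "K * vnorm x \<le> K * 1" using assms by (intro mult_left_mono) auto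
  then show "v \<le> K" using assms(2)[OF x(1)] x(3) by simp
qed

lemma BL_I:
  assumes "\<And>x. x \<in> l2 \<Longrightarrow> T x \<in> l2"
    "\<And>x y c. x \<in> l2 \<Longrightarrow> y \<in> l2 \<Longrightarrow> T (\<lambda>n. c * x n + y n) = (\<lambda>n. c * T x n + T y n)"
    "\<And>x. x \<in> l2 \<Longrightarrow> vnorm (T x) \<le> K * vnorm x"
    "\<And>x. x \<notin> l2 \<Longrightarrow> T x = (\<lambda>_. 0)"
  shows "T \<in> BL"
  unfolding BL_def bounded_op_def using assms by blast

lemma op_zero_BL[simp,intro]: "op_zero \<in> BL"
  by (rule BL_I[where K=0]) auto

lemma op_add_BL[simp,intro]: assumes "T \<in> BL" "S \<in> BL" shows "op_add T S \<in> BL"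
proof -
  obtain K1 where K1: "K1 \<ge> 0" "\<And>x. x \<in> l2 \<Longrightarrow> vnorm (T x) \<le> K1 * vnorm x" using BL_boundE[OF assms(1)] by blast
  obtain K2 where K2: "K2 \<ge> 0" "\<And>x. x \<in> l2 \<Longrightarrow> vnorm (S x) \<le> K2 * vnorm x" using BL_boundE[OF assms(2)] by blast
  show ?thesis
  proof (rule BL_I[where K="K1+K2"])
    fix x assume x: "x \<in> l2"
    show "op_add T S x \<in> l2" using x assms by simp
    have "vnorm (\<lambda>n. T x n + S x n) \<le> vnorm (T x) + vnorm (S x)" using x assms by (intro vnorm_triangle) auto
    also have "\<dots> \<le> (K1 + K2) * vnorm x" using K1(2)[OF x] K2(2)[OF x] by (simp add: algebra_simps)
    finally show "vnorm (op_add T S x) \<le> (K1 + K2) * vnorm x" by simp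
  next
    fix x y c assume "x \<in> l2" "y \<in> l2"
    then have "op_add T S (\<lambda>n. c * x n + y n) = (\<lambda>n. (c * T x n + T y n) + (c * S x n + S y n))"
      using assms by (simp add: BL_lincomb)
    then show "op_add T S (\<lambda>n. c * x n + y n) = (\<lambda>n. c * op_add T S x n + op_add T S y n)"
      by (simp add: algebra_simps)
  next
    fix x assume "x \<notin> l2" then show "op_add T S x = (\<lambda>_. 0)" using assms by (simp add: BL_outside)
  qed
qed

lemma op_scale_BL[simp,intro]: assumes "T \<in> BL" shows "op_scale c T \<in> BL"
proof -
  obtain K1 where K1: "K1 \<ge> 0" "\<And>x. x \<in> l2 \<Longrightarrow> vnorm (T x) \<le> K1 * vnorm x" using BL_boundE[OF assms(1)] by blast
  show ?thesis
  proof (rule BL_I[where K="cmod c * K1"])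
    fix x assume x: "x \<in> l2"
    show "op_scale c T x \<in> l2" using x assms by simp
    have "vnorm (\<lambda>n. c * T x n) = cmod c * vnorm (T x)" using x assms by (intro vnorm_scale) auto
    also have "\<dots> \<le> cmod c * (K1 * vnorm x)" using K1(2)[OF x] by (intro mult_left_mono) auto
    finally show "vnorm (op_scale c T x) \<le> cmod c * K1 * vnorm x" by simp
  next
    fix x y d assume "x \<in> l2" "y \<in> l2"
    then have "op_scale c T (\<lambda>n. d * x n + y n) = (\<lambda>n. c * (d * T x n + T y n))"
      using assms by (simp add: BL_lincomb)
    then show "op_scale c T (\<lambda>n. d * x n + y n) = (\<lambda>n. d * op_scale c T x n + op_scale c T y n)"
      by (simp add: algebra_simps)
  next
    fix x assume "x \<notin> l2" then show "op_scale c T x = (\<lambda>_. 0)" using assms by (simp add: BL_outside)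
  qed
qed

lemma op_mul_BL[simp,intro]: assumes "T \<in> BL" "S \<in> BL" shows "op_mul T S \<in> BL"
proof -
  obtain K1 where K1: "K1 \<ge> 0" "\<And>x. x \<in> l2 \<Longrightarrow> vnorm (T x) \<le> K1 * vnorm x" using BL_boundE[OF assms(1)] by blast
  obtain K2 where K2: "K2 \<ge> 0" "\<And>x. x \<in> l2 \<Longrightarrow> vnorm (S x) \<le> K2 * vnorm x" using BL_boundE[OF assms(2)] by blast
  show ?thesis
  proof (rule BL_I[where K="K1*K2"])
    fix x assume x: "x \<in> l2"
    show "op_mul T S x \<in> l2" using x assms by simp
    have "vnorm (T (S x)) \<le> K1 * vnorm (S x)" using x assms K1 by auto
    also have "\<dots> \<le> K1 * (K2 * vnorm x)" using K2(2)[OF x] K1(1) by (intro mult_left_mono) auto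
    finally show "vnorm (op_mul T S x) \<le> K1 * K2 * vnorm x" by simp
  next
    fix x y d assume "x \<in> l2" "y \<in> l2"
    then show "op_mul T S (\<lambda>n. d * x n + y n) = (\<lambda>n. d * op_mul T S x n + op_mul T S y n)"
      using assms by (simp add: BL_lincomb)
  next
    fix x assume "x \<notin> l2" then show "op_mul T S x = (\<lambda>_. 0)" using assms by (simp add: BL_outside)
  qed
qed

lemma op_eqI: assumes "\<And>x. x \<in> l2 \<Longrightarrow> F x = G x" "\<And>x. x \<notin> l2 \<Longrightarrow> F x = G x" shows "F = G"
  using assms by (metis ext)

lemma op_mul_add_left: "op_mul (op_add T S) R = op_add (op_mul T R) (op_mul S R)"
  by (rule ext) simp
lemma op_mul_scale_left: "op_mul (op_scale c T) R = op_scale c (op_mul T R)"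
  by (rule ext) simp
lemma op_mul_add_right: assumes "R \<in> BL" "T \<in> BL" "S \<in> BL"
  shows "op_mul R (op_add T S) = op_add (op_mul R T) (op_mul R S)"
  by (rule op_eqI) (use assms in \<open>auto simp: BL_apply_add BL_outside\<close>)
lemma op_mul_scale_right: assumes "R \<in> BL" "T \<in> BL"
  shows "op_mul R (op_scale c T) = op_scale c (op_mul R T)"
  by (rule op_eqI) (use assms in \<open>auto simp: BL_apply_scale BL_outside\<close>)
lemma op_mul_assoc: "op_mul (op_mul T S) R = op_mul T (op_mul S R)"
  by (rule ext) simp
lemma op_mul_zero_left[simp]: "op_mul op_zero T = op_zero"
  by (rule ext) simp
lemma op_mul_zero_right[simp]: "T \<in> BL \<Longrightarrow> op_mul T op_zero = op_zero"
  by (rule ext) simp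

section \<open>Adjoints\<close>

definition unit_vec :: "nat \<Rightarrow> nat \<Rightarrow> complex" where "unit_vec k = (\<lambda>n. if n = k then 1 else 0)"
definition truncate :: "nat \<Rightarrow> (nat \<Rightarrow> complex) \<Rightarrow> nat \<Rightarrow> complex" where
  "truncate N x = (\<lambda>n. if n < N then x n else 0)"

lemma unit_vec_l2[simp,intro]: "unit_vec k \<in> l2"
  unfolding l2_def unit_vec_def mem_Collect_eq by (rule summable_finite[of "{k}"]) auto

lemma truncate_l2[simp,intro]: "truncate N x \<in> l2"
  unfolding l2_def truncate_def mem_Collect_eq by (rule summable_finite[of "{..<N}"]) auto

lemma truncate_Suc: "truncate (Suc N) x = (\<lambda>n. x N * unit_vec N n + truncate N x n)"
proof (rule ext)
  fix n show "truncate (Suc N) x n = x N * unit_vec N n + truncate N x n"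
    unfolding truncate_def unit_vec_def by (cases "n < N"; cases "n = N") auto
qed

lemma truncate_0: "truncate 0 x = (\<lambda>n. 0)"
  unfolding truncate_def by simp

lemma inner2_diff_left: assumes "a \<in> l2" "b \<in> l2" "z \<in> l2"
  shows "inner2 (\<lambda>n. a n - b n) z = inner2 a z - inner2 b z"
proof -
  have "inner2 (\<lambda>n. (-1) * b n + a n) z = (-1) * inner2 b z + inner2 a z"
    by (rule inner2_lincomb_left[OF assms(2,1,3)])
  moreover have "(\<lambda>n. (-1) * b n + a n) = (\<lambda>n. a n - b n)" by (rule ext) simp
  ultimately show ?thesis by simp
qed

lemma inner2_diff_right: assumes "a \<in> l2" "b \<in> l2" "z \<in> l2"
  shows "inner2 z (\<lambda>n. a n - b n) = inner2 z a - inner2 z b"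
proof -
  have "inner2 z (\<lambda>n. (-1) * b n + a n) = cnj (-1) * inner2 z b + inner2 z a"
    by (rule inner2_lincomb_right[OF assms(2,1,3)])
  moreover have "(\<lambda>n. (-1) * b n + a n) = (\<lambda>n. a n - b n)" by (rule ext) simp
  ultimately show ?thesis by simp
qed

lemma inner2_add_left: assumes "a \<in> l2" "b \<in> l2" "z \<in> l2"
  shows "inner2 (\<lambda>n. a n + b n) z = inner2 a z + inner2 b z"
  using inner2_lincomb_left[OF assms, of 1] by simp
lemma inner2_add_right: assumes "a \<in> l2" "b \<in> l2" "z \<in> l2"
  shows "inner2 z (\<lambda>n. a n + b n) = inner2 z a + inner2 z b"
  using inner2_lincomb_right[OF assms, of 1] by simp
lemma inner2_scale_left: assumes "a \<in> l2" "z \<in> l2"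
  shows "inner2 (\<lambda>n. c * a n) z = c * inner2 a z"
  using inner2_lincomb_left[OF assms(1) l2_zero assms(2), of c] by simp
lemma inner2_scale_right: assumes "a \<in> l2" "z \<in> l2"
  shows "inner2 z (\<lambda>n. c * a n) = cnj c * inner2 z a"
  using inner2_lincomb_right[OF assms(1) l2_zero assms(2), of c] by simp

lemma inner2_apply_truncate: assumes "T \<in> BL" "y \<in> l2"
  shows "inner2 (T (truncate N x)) y = (\<Sum>k<N. x k * inner2 (T (unit_vec k)) y)"
proof (induction N)
  case 0
  then show ?case using assms by (simp add: truncate_0)
next
  case (Suc N)
  have "T (truncate (Suc N) x) = (\<lambda>n. x N * T (unit_vec N) n + T (truncate N x) n)"
    unfolding truncate_Suc by (rule BL_lincomb[OF assms(1)]) auto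
  then have "inner2 (T (truncate (Suc N) x)) y = x N * inner2 (T (unit_vec N)) y + inner2 (T (truncate N x)) y"
    using assms by (simp add: inner2_lincomb_left)
  then show ?case using Suc by simp
qed

lemma vnorm_truncate: "vnorm (truncate N z) = L2_set (\<lambda>n. cmod (z n)) {..<N}"
proof -
  have "(\<Sum>n. (cmod (truncate N z n))^2) = (\<Sum>n<N. (cmod (truncate N z n))^2)"
    by (rule suminf_finite) (auto simp: truncate_def)
  also have "\<dots> = (\<Sum>n<N. (cmod (z n))^2)" by (rule sum.cong) (auto simp: truncate_def)
  finally show ?thesis unfolding vnorm_def L2_set_def by simp
qed

lemma truncate_tendsto: assumes "x \<in> l2" shows "(\<lambda>N. vnorm (\<lambda>n. x n - truncate N x n)) \<longlonglongrightarrow> 0"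
proof -
  define f where "f = (\<lambda>n. (cmod (x n))^2)"
  have sf: "summable f" using assms by (simp add: f_def l2_def)
  have eq: "vnorm (\<lambda>n. x n - truncate N x n) = sqrt (suminf f - sum f {..<N})" for N
  proof -
    define a where "a = (\<lambda>n. if n < N then f n else 0)"
    have sa: "summable a" unfolding a_def by (rule summable_finite[of "{..<N}"]) auto
    have suma: "suminf a = sum f {..<N}"
      unfolding a_def by (subst suminf_finite[of "{..<N}"]) auto
    have "(\<lambda>n. (cmod (x n - truncate N x n))^2) = (\<lambda>n. f n - a n)"
      by (rule ext) (simp add: a_def f_def truncate_def)
    then have "(\<Sum>n. (cmod (x n - truncate N x n))^2) = (\<Sum>n. f n - a n)" by simp
    also have "\<dots> = suminf f - suminf a" by (rule suminf_diff[OF sf sa, symmetric])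
    finally show ?thesis unfolding vnorm_def suma by simp
  qed
  have "(\<lambda>N. sum f {..<N}) \<longlonglongrightarrow> suminf f" by (rule summable_LIMSEQ[OF sf])
  then have "(\<lambda>N. suminf f - sum f {..<N}) \<longlonglongrightarrow> suminf f - suminf f" by (intro tendsto_diff) auto
  then have "(\<lambda>N. sqrt (suminf f - sum f {..<N})) \<longlonglongrightarrow> sqrt 0" by (intro tendsto_real_sqrt) simp
  then show ?thesis unfolding eq by simp
qed

text \<open>Since op_adj is a definite description, its existence has to be shown by an explicit
  candidate: the k-th coordinate of the adjoint applied to y is the conjugate of the inner product
  of T applied to the k-th unit vector with y.\<close>

definition adj_coord :: "l2op \<Rightarrow> l2op" where
  "adj_coord T = (\<lambda>y. if y \<in> l2 then (\<lambda>k. cnj (inner2 (T (unit_vec k)) y)) else (\<lambda>n. 0))"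

lemma inner2_apply_truncate_adj_coord: assumes "T \<in> BL" "y \<in> l2"
  shows "inner2 (T (truncate N x)) y = (\<Sum>k<N. x k * cnj (adj_coord T y k))"
  using inner2_apply_truncate[OF assms] assms by (simp add: adj_coord_def)

lemma adj_coord_l2: assumes "T \<in> BL" "y \<in> l2"
  shows "adj_coord T y \<in> l2" "vnorm (adj_coord T y) \<le> op_norm T * vnorm y"
proof -
  define z where "z = adj_coord T y"
  have "L2_set (\<lambda>n. cmod (z n)) {..<N} \<le> op_norm T * vnorm y" for N
  proof -
    define L where "L = L2_set (\<lambda>n. cmod (z n)) {..<N}"
    have "complex_of_real (L^2) = (\<Sum>k<N. z k * cnj (z k))"
      unfolding L_def L2_set_def by (simp add: sum_nonneg complex_norm_square flip: of_real_power)
    also have "\<dots> = inner2 (T (truncate N z)) y"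
      using inner2_apply_truncate_adj_coord[OF assms, of N z] by (simp add: z_def)
    finally have "L^2 \<le> vnorm (T (truncate N z)) * vnorm y"
      using inner2_Cauchy_Schwarz[of "T (truncate N z)" y] assms by (metis BL_l2 norm_of_real
          abs_of_nonneg zero_le_power2 truncate_l2)
    also have "\<dots> \<le> op_norm T * L * vnorm y"
      unfolding L_def vnorm_truncate[symmetric] using assms by (intro mult_right_mono op_norm_bound) auto
    finally have "L * L \<le> (op_norm T * vnorm y) * L" by (simp add: power2_eq_square algebra_simps)
    moreover have "0 \<le> L" "0 \<le> op_norm T * vnorm y" unfolding L_def using assms by auto
    ultimately show ?thesis unfolding L_def[symmetric]
      by (cases "L = 0") (auto intro: mult_right_le_imp_le)
  qed
  then show "adj_coord T y \<in> l2" "vnorm (adj_coord T y) \<le> op_norm T * vnorm y"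
    unfolding z_def by (rule l2_vnorm_le_if_L2_set_le)+
qed

lemma inner2_adj_coord: assumes "T \<in> BL" "x \<in> l2" "y \<in> l2"
  shows "inner2 (T x) y = inner2 x (adj_coord T y)"
proof -
  have "(\<lambda>N. inner2 (T (truncate N x)) y - inner2 (T x) y) \<longlonglongrightarrow> 0"
  proof (rule Lim_null_comparison)
    show "(\<lambda>N. op_norm T * vnorm (\<lambda>n. x n - truncate N x n) * vnorm y) \<longlonglongrightarrow> 0"
      using truncate_tendsto[OF assms(2)] by (auto intro!: tendsto_eq_intros)
    show "\<forall>\<^sub>F N in sequentially. norm (inner2 (T (truncate N x)) y - inner2 (T x) y)
            \<le> op_norm T * vnorm (\<lambda>n. x n - truncate N x n) * vnorm y"
    proof (rule always_eventually, rule allI)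
      fix N
      have d: "T (\<lambda>n. x n - truncate N x n) = (\<lambda>n. T x n - T (truncate N x) n)"
        using assms by (intro BL_apply_diff) auto
      have "inner2 (T (truncate N x)) y - inner2 (T x) y = - inner2 (\<lambda>n. T x n - T (truncate N x) n) y"
        using assms by (simp add: inner2_diff_left)
      then have "norm (inner2 (T (truncate N x)) y - inner2 (T x) y) = cmod (inner2 (T (\<lambda>n. x n - truncate N x n)) y)"
        unfolding d by simp
      also have "\<dots> \<le> vnorm (T (\<lambda>n. x n - truncate N x n)) * vnorm y"
        using assms by (intro inner2_Cauchy_Schwarz) auto
      also have "\<dots> \<le> (op_norm T * vnorm (\<lambda>n. x n - truncate N x n)) * vnorm y"
        using assms by (intro mult_right_mono op_norm_bound) auto
      finally show "norm (inner2 (T (truncate N x)) y - inner2 (T x) y)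
            \<le> op_norm T * vnorm (\<lambda>n. x n - truncate N x n) * vnorm y" by simp
    qed
  qed
  then have "(\<lambda>N. inner2 (T (truncate N x)) y) \<longlonglongrightarrow> inner2 (T x) y" by (rule LIM_zero_cancel)
  then have "(\<lambda>N. \<Sum>k<N. x k * cnj (adj_coord T y k)) \<longlonglongrightarrow> inner2 (T x) y"
    using inner2_apply_truncate_adj_coord[OF assms(1,3)] by simp
  then have "(\<lambda>k. x k * cnj (adj_coord T y k)) sums inner2 (T x) y" unfolding sums_def .
  then show ?thesis unfolding inner2_def by (simp add: sums_iff)
qed

lemma adj_coord_BL: assumes "T \<in> BL" shows "adj_coord T \<in> BL"
proof (rule BL_I[where K="op_norm T"])
  fix x assume "x \<in> l2"
  then show "adj_coord T x \<in> l2" "vnorm (adj_coord T x) \<le> op_norm T * vnorm x"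
    using adj_coord_l2[OF assms] by auto
next
  fix x y c assume xy: "x \<in> l2" "y \<in> l2"
  have "inner2 (T (unit_vec k)) (\<lambda>n. c * x n + y n) = cnj c * inner2 (T (unit_vec k)) x + inner2 (T (unit_vec k)) y" for k
    using assms xy by (intro inner2_lincomb_right) auto
  then show "adj_coord T (\<lambda>n. c * x n + y n) = (\<lambda>n. c * adj_coord T x n + adj_coord T y n)"
    using xy by (simp add: adj_coord_def)
next
  fix x assume "x \<notin> l2" then show "adj_coord T x = (\<lambda>_. 0)" by (simp add: adj_coord_def)
qed

lemma BL_eqI_inner2: assumes "S1 \<in> BL" "S2 \<in> BL"
  "\<And>x y. x \<in> l2 \<Longrightarrow> y \<in> l2 \<Longrightarrow> inner2 x (S1 y) = inner2 x (S2 y)"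
  shows "S1 = S2"
proof (rule op_eqI)
  fix y assume y: "y \<in> l2"
  define d where "d = (\<lambda>n. S1 y n - S2 y n)"
  have dl: "d \<in> l2" unfolding d_def using assms y by auto
  have "inner2 d d = inner2 d (S1 y) - inner2 d (S2 y)"
    unfolding d_def using assms y by (intro inner2_diff_right) auto
  also have "\<dots> = 0" using assms(3)[OF dl y] by simp
  finally have "(vnorm d)^2 = 0" using inner2_self[OF dl] by simp
  then have "d = (\<lambda>n. 0)" using vnorm_eq_0_iff[OF dl] by simp
  then show "S1 y = S2 y" unfolding d_def by (metis eq_iff_diff_eq_0 ext)
next
  fix y assume "y \<notin> l2" then show "S1 y = S2 y" using assms by (simp add: BL_outside)
qed

definition is_adjoint :: "l2op \<Rightarrow> l2op \<Rightarrow> bool" where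
  "is_adjoint T S \<longleftrightarrow> S \<in> BL \<and> (\<forall>x\<in>l2. \<forall>y\<in>l2. inner2 (T x) y = inner2 x (S y))"

lemma ex1_adjoint: assumes "T \<in> BL" shows "\<exists>!S. is_adjoint T S"
proof (rule ex1I)
  show "is_adjoint T (adj_coord T)" unfolding is_adjoint_def using adj_coord_BL[OF assms] inner2_adj_coord[OF assms] by blast
next
  fix S assume "is_adjoint T S"
  then show "S = adj_coord T" unfolding is_adjoint_def
    using adj_coord_BL[OF assms] inner2_adj_coord[OF assms] by (intro BL_eqI_inner2) auto
qed

lemma op_adj_is_adjoint: assumes "T \<in> BL" shows "is_adjoint T (op_adj T)"
proof -
  have "op_adj T = (THE S. is_adjoint T S)" unfolding op_adj_def is_adjoint_def by simp
  then show ?thesis using theI'[OF ex1_adjoint[OF assms]] by simp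
qed

lemma op_adj_BL[simp,intro]: "T \<in> BL \<Longrightarrow> op_adj T \<in> BL"
  using op_adj_is_adjoint unfolding is_adjoint_def by blast

lemma inner2_op_adj: "T \<in> BL \<Longrightarrow> x \<in> l2 \<Longrightarrow> y \<in> l2 \<Longrightarrow> inner2 (T x) y = inner2 x (op_adj T y)"
  using op_adj_is_adjoint unfolding is_adjoint_def by blast

lemma op_adj_unique: assumes "T \<in> BL" "S \<in> BL" "\<And>x y. x \<in> l2 \<Longrightarrow> y \<in> l2 \<Longrightarrow> inner2 (T x) y = inner2 x (S y)"
  shows "op_adj T = S"
  using ex1_adjoint[OF assms(1)] op_adj_is_adjoint[OF assms(1)] assms unfolding is_adjoint_def by blast

lemma inner2_op_adj_left: "T \<in> BL \<Longrightarrow> x \<in> l2 \<Longrightarrow> y \<in> l2 \<Longrightarrow> inner2 (op_adj T x) y = inner2 x (T y)"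
proof -
  assume a: "T \<in> BL" "x \<in> l2" "y \<in> l2"
  have "inner2 (op_adj T x) y = cnj (inner2 y (op_adj T x))" using a by (intro inner2_cnj_swap) auto
  also have "\<dots> = cnj (inner2 (T y) x)" using inner2_op_adj[OF a(1,3,2)] by simp
  also have "\<dots> = inner2 x (T y)" using a by (simp add: inner2_cnj_swap[of x "T y"])
  finally show ?thesis .
qed

lemma op_adj_adj[simp]: "T \<in> BL \<Longrightarrow> op_adj (op_adj T) = T"
  by (rule op_adj_unique) (auto simp: inner2_op_adj_left)

lemma op_adj_add: assumes "T \<in> BL" "S \<in> BL" shows "op_adj (op_add T S) = op_add (op_adj T) (op_adj S)"
  by (rule op_adj_unique) (use assms in \<open>auto simp: inner2_add_left inner2_add_right inner2_op_adj\<close>)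

lemma op_adj_scale: assumes "T \<in> BL" shows "op_adj (op_scale c T) = op_scale (cnj c) (op_adj T)"
  by (rule op_adj_unique) (use assms in \<open>auto simp: inner2_scale_left inner2_scale_right inner2_op_adj\<close>)

lemma op_adj_mul: assumes "T \<in> BL" "S \<in> BL" shows "op_adj (op_mul T S) = op_mul (op_adj S) (op_adj T)"
  by (rule op_adj_unique) (use assms in \<open>auto simp: inner2_op_adj\<close>)

section \<open>Compact operators\<close>

definition cauchy_l2 :: "(nat \<Rightarrow> nat \<Rightarrow> complex) \<Rightarrow> bool" where
  "cauchy_l2 \<sigma> \<longleftrightarrow> (\<forall>e>0. \<exists>N. \<forall>m\<ge>N. \<forall>n\<ge>N. vnorm (\<lambda>i. \<sigma> m i - \<sigma> n i) < e)"

definition in_unit_ball :: "(nat \<Rightarrow> nat \<Rightarrow> complex) \<Rightarrow> bool" where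
  "in_unit_ball xs \<longleftrightarrow> (\<forall>k. xs k \<in> l2 \<and> vnorm (xs k) \<le> 1)"

lemma compact_l2op_iff: "compact_l2op T \<longleftrightarrow> T \<in> BL \<and>
   (\<forall>xs. in_unit_ball xs \<longrightarrow> (\<exists>r. strict_mono r \<and> cauchy_l2 (\<lambda>k. T (xs (r k)))))"
  unfolding compact_l2op_def cauchy_l2_def in_unit_ball_def vdiff_def by simp

lemma compact_l2opD: "compact_l2op T \<Longrightarrow> in_unit_ball xs \<Longrightarrow> \<exists>r. strict_mono r \<and> cauchy_l2 (\<lambda>k. T (xs (r k)))"
  unfolding compact_l2op_iff by blast
lemma compact_l2op_BL: "compact_l2op T \<Longrightarrow> T \<in> BL"
  unfolding compact_l2op_iff by blast
lemma compact_l2opI: "T \<in> BL \<Longrightarrow> (\<And>xs. in_unit_ball xs \<Longrightarrow> \<exists>r. strict_mono r \<and> cauchy_l2 (\<lambda>k. T (xs (r k)))) \<Longrightarrow> compact_l2op T"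
  unfolding compact_l2op_iff by blast

lemma in_unit_ball_subseq: "in_unit_ball xs \<Longrightarrow> in_unit_ball (\<lambda>k. xs (r k))"
  unfolding in_unit_ball_def by blast

lemma cauchy_l2_subseq: assumes "cauchy_l2 \<sigma>" "strict_mono r" shows "cauchy_l2 (\<lambda>k. \<sigma> (r k))"
  unfolding cauchy_l2_def
proof (intro allI impI)
  fix e :: real assume "e > 0"
  then obtain N where N: "\<forall>m\<ge>N. \<forall>n\<ge>N. vnorm (\<lambda>i. \<sigma> m i - \<sigma> n i) < e"
    using assms(1) unfolding cauchy_l2_def by blast
  have "\<forall>m\<ge>N. \<forall>n\<ge>N. vnorm (\<lambda>i. \<sigma> (r m) i - \<sigma> (r n) i) < e"
  proof (intro allI impI)
    fix m n assume "m \<ge> N" "n \<ge> N"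
    moreover have "r m \<ge> m" "r n \<ge> n" using assms(2) by (auto simp: seq_suble)
    ultimately show "vnorm (\<lambda>i. \<sigma> (r m) i - \<sigma> (r n) i) < e" using N by auto
  qed
  then show "\<exists>N. \<forall>m\<ge>N. \<forall>n\<ge>N. vnorm (\<lambda>i. \<sigma> (r m) i - \<sigma> (r n) i) < e" by blast
qed

lemma cauchy_l2_lincomb: assumes "\<And>k. \<sigma> k \<in> l2" "\<And>k. \<tau> k \<in> l2" "cauchy_l2 \<sigma>" "cauchy_l2 \<tau>"
  shows "cauchy_l2 (\<lambda>k i. c * \<sigma> k i + \<tau> k i)"
  unfolding cauchy_l2_def
proof (intro allI impI)
  fix e :: real assume e: "e > 0"
  define e1 where "e1 = e / (2 * (cmod c + 1))"
  have cp: "0 < cmod c + 1" using norm_ge_zero[of c] by linarith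
  have e1: "e1 > 0" unfolding e1_def using e cp by (intro divide_pos_pos mult_pos_pos) auto
  obtain N1 where N1: "\<forall>m\<ge>N1. \<forall>n\<ge>N1. vnorm (\<lambda>i. \<sigma> m i - \<sigma> n i) < e1"
    using assms(3) e1 unfolding cauchy_l2_def by blast
  obtain N2 where N2: "\<forall>m\<ge>N2. \<forall>n\<ge>N2. vnorm (\<lambda>i. \<tau> m i - \<tau> n i) < e/2"
    using assms(4) e unfolding cauchy_l2_def by (meson half_gt_zero)
  have "vnorm (\<lambda>i. (c * \<sigma> m i + \<tau> m i) - (c * \<sigma> n i + \<tau> n i)) < e"
    if "m \<ge> max N1 N2" "n \<ge> max N1 N2" for m n
  proof -
    have eq: "(\<lambda>i. (c * \<sigma> m i + \<tau> m i) - (c * \<sigma> n i + \<tau> n i)) = (\<lambda>i. c * (\<sigma> m i - \<sigma> n i) + (\<tau> m i - \<tau> n i))"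
      by (rule ext) (simp add: algebra_simps)
    have l: "(\<lambda>i. \<sigma> m i - \<sigma> n i) \<in> l2" "(\<lambda>i. \<tau> m i - \<tau> n i) \<in> l2" using assms by auto
    have "vnorm (\<lambda>i. c * (\<sigma> m i - \<sigma> n i) + (\<tau> m i - \<tau> n i))
        \<le> vnorm (\<lambda>i. c * (\<sigma> m i - \<sigma> n i)) + vnorm (\<lambda>i. \<tau> m i - \<tau> n i)"
      using l by (intro vnorm_triangle) auto
    also have "\<dots> = cmod c * vnorm (\<lambda>i. \<sigma> m i - \<sigma> n i) + vnorm (\<lambda>i. \<tau> m i - \<tau> n i)"
      using vnorm_scale[OF l(1)] by simp
    also have "\<dots> \<le> cmod c * e1 + vnorm (\<lambda>i. \<tau> m i - \<tau> n i)"
      using N1 that by (intro add_right_mono mult_left_mono) (auto intro: less_imp_le)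
    also have "\<dots> < cmod c * e1 + e/2" using N2 that by auto
    also have "cmod c * e1 \<le> e / 2"
    proof -
      have "cmod c * e1 = e / 2 * (cmod c / (cmod c + 1))" unfolding e1_def by (simp add: field_simps)
      also have "\<dots> \<le> e / 2 * 1" using e cp by (intro mult_left_mono) (auto simp: divide_le_eq)
      finally show ?thesis by simp
    qed
    finally show ?thesis unfolding eq by simp
  qed
  then show "\<exists>N. \<forall>m\<ge>N. \<forall>n\<ge>N. vnorm (\<lambda>i. (c * \<sigma> m i + \<tau> m i) - (c * \<sigma> n i + \<tau> n i)) < e" by blast
qed

lemma cauchy_l2_apply: assumes "T \<in> BL" "\<And>k. \<sigma> k \<in> l2" "cauchy_l2 \<sigma>"
  shows "cauchy_l2 (\<lambda>k. T (\<sigma> k))"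
  unfolding cauchy_l2_def
proof (intro allI impI)
  fix e :: real assume e: "e > 0"
  define M where "M = op_norm T + 1"
  have M: "M > 0" unfolding M_def using assms by (simp add: add_nonneg_pos)
  obtain N where N: "\<forall>m\<ge>N. \<forall>n\<ge>N. vnorm (\<lambda>i. \<sigma> m i - \<sigma> n i) < e / M"
    using assms(3) e M unfolding cauchy_l2_def by (meson divide_pos_pos)
  have "vnorm (\<lambda>i. T (\<sigma> m) i - T (\<sigma> n) i) < e" if "m \<ge> N" "n \<ge> N" for m n
  proof -
    have "vnorm (\<lambda>i. T (\<sigma> m) i - T (\<sigma> n) i) = vnorm (T (\<lambda>i. \<sigma> m i - \<sigma> n i))"
      using assms by (simp add: BL_apply_diff)
    also have "\<dots> \<le> op_norm T * vnorm (\<lambda>i. \<sigma> m i - \<sigma> n i)" using assms by (intro op_norm_bound) auto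
    also have "\<dots> \<le> M * vnorm (\<lambda>i. \<sigma> m i - \<sigma> n i)" unfolding M_def using assms
      by (intro mult_right_mono) auto
    also have "\<dots> < M * (e / M)" using N that M by (intro mult_strict_left_mono) auto
    also have "\<dots> = e" using M by simp
    finally show ?thesis .
  qed
  then show "\<exists>N. \<forall>m\<ge>N. \<forall>n\<ge>N. vnorm (\<lambda>i. T (\<sigma> m) i - T (\<sigma> n) i) < e" by blast
qed

lemma compact_l2op_zero[simp,intro]: "compact_l2op op_zero"
proof (rule compact_l2opI)
  fix xs :: "nat \<Rightarrow> nat \<Rightarrow> complex"
  have "cauchy_l2 (\<lambda>k. op_zero (xs k))" unfolding cauchy_l2_def by simp
  then show "\<exists>r. strict_mono r \<and> cauchy_l2 (\<lambda>k. op_zero (xs (r k)))"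
    using strict_mono_id unfolding cauchy_l2_def by auto
qed simp

lemma compact_l2op_lincomb: assumes "compact_l2op K1" "compact_l2op K2"
  shows "compact_l2op (op_add (op_scale c K1) K2)"
proof (rule compact_l2opI)
  show "op_add (op_scale c K1) K2 \<in> BL" using assms compact_l2op_BL by auto
  fix xs assume xs: "in_unit_ball xs"
  obtain r1 where r1: "strict_mono r1" "cauchy_l2 (\<lambda>k. K1 (xs (r1 k)))" using compact_l2opD[OF assms(1) xs] by blast
  obtain r2 where r2: "strict_mono r2" "cauchy_l2 (\<lambda>k. K2 (xs (r1 (r2 k))))"
    using compact_l2opD[OF assms(2) in_unit_ball_subseq[OF xs, of r1]] by blast
  have c1: "cauchy_l2 (\<lambda>k. K1 (xs (r1 (r2 k))))" using cauchy_l2_subseq[OF r1(2) r2(1)] by simp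
  have l: "\<And>k. xs k \<in> l2" using xs unfolding in_unit_ball_def by blast
  have "cauchy_l2 (\<lambda>k i. c * K1 (xs (r1 (r2 k))) i + K2 (xs (r1 (r2 k))) i)"
    using assms l by (intro cauchy_l2_lincomb c1 r2(2)) (auto dest: compact_l2op_BL)
  then have "cauchy_l2 (\<lambda>k. op_add (op_scale c K1) K2 (xs ((r1 \<circ> r2) k)))" by simp
  moreover have "strict_mono (r1 \<circ> r2)" by (rule strict_mono_o[OF r1(1) r2(1)])
  ultimately show "\<exists>r. strict_mono r \<and> cauchy_l2 (\<lambda>k. op_add (op_scale c K1) K2 (xs (r k)))" by blast
qed

lemma op_add_zero_right: "op_add T op_zero = T" by (rule ext) simp
lemma op_scale_one: "op_scale 1 T = T" by (rule ext) simp

lemma compact_l2op_scale: "compact_l2op K \<Longrightarrow> compact_l2op (op_scale c K)"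
  using compact_l2op_lincomb[of K op_zero c] by (simp add: op_add_zero_right)
lemma compact_l2op_add: "compact_l2op K1 \<Longrightarrow> compact_l2op K2 \<Longrightarrow> compact_l2op (op_add K1 K2)"
  using compact_l2op_lincomb[of K1 K2 1] by (simp add: op_scale_one)

lemma compact_l2op_mul_left: assumes "T \<in> BL" "compact_l2op K" shows "compact_l2op (op_mul T K)"
proof (rule compact_l2opI)
  show "op_mul T K \<in> BL" using assms compact_l2op_BL by auto
  fix xs assume xs: "in_unit_ball xs"
  obtain r where r: "strict_mono r" "cauchy_l2 (\<lambda>k. K (xs (r k)))" using compact_l2opD[OF assms(2) xs] by blast
  have l: "\<And>k. xs k \<in> l2" using xs unfolding in_unit_ball_def by blast
  have KB: "K \<in> BL" using assms compact_l2op_BL by auto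
  have "cauchy_l2 (\<lambda>k. T (K (xs (r k))))" by (rule cauchy_l2_apply[OF assms(1) _ r(2)]) (use KB l in auto)
  then show "\<exists>r. strict_mono r \<and> cauchy_l2 (\<lambda>k. op_mul T K (xs (r k)))" using r by auto
qed

lemma compact_l2op_mul_right: assumes "compact_l2op K" "T \<in> BL" shows "compact_l2op (op_mul K T)"
proof (rule compact_l2opI)
  have KB: "K \<in> BL" using assms compact_l2op_BL by auto
  show "op_mul K T \<in> BL" using assms KB by auto
  fix xs assume xs: "in_unit_ball xs"
  have l: "\<And>k. xs k \<in> l2" and b: "\<And>k. vnorm (xs k) \<le> 1" using xs unfolding in_unit_ball_def by auto
  define M where "M = op_norm T + 1"
  have M: "M > 0" unfolding M_def using assms by (simp add: add_nonneg_pos)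
  define s where "s = complex_of_real (1 / M)"
  have cs: "cmod s = 1 / M" unfolding s_def using M by (simp add: norm_divide)
  have Ms: "complex_of_real M * s = 1" unfolding s_def using M by (simp add: of_real_divide)
  define ys where "ys = (\<lambda>k i. s * T (xs k) i)"
  have ysl: "ys k \<in> l2" for k unfolding ys_def using assms l by (intro l2_scale) auto
  have "in_unit_ball ys" unfolding in_unit_ball_def
  proof (intro allI conjI)
    fix k show "ys k \<in> l2" by (rule ysl)
    have "vnorm (ys k) = cmod s * vnorm (T (xs k))"
      unfolding ys_def by (rule vnorm_scale) (use assms l in auto)
    also have "\<dots> = (1 / M) * vnorm (T (xs k))" using cs by simp
    also have "\<dots> \<le> (1 / M) * (op_norm T * vnorm (xs k))" using M assms l
      by (intro mult_left_mono op_norm_bound) auto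
    also have "\<dots> \<le> (1 / M) * (M * 1)" using M assms l b unfolding M_def
      by (intro mult_left_mono mult_mono) auto
    finally show "vnorm (ys k) \<le> 1" using M by simp
  qed
  then obtain r where r: "strict_mono r" "cauchy_l2 (\<lambda>k. K (ys (r k)))" using compact_l2opD[OF assms(1)] by blast
  have c: "cauchy_l2 (\<lambda>k i. complex_of_real M * K (ys (r k)) i + (\<lambda>k i. 0) k i)"
    by (rule cauchy_l2_lincomb[OF _ _ r(2)]) (use KB ysl in \<open>auto simp: cauchy_l2_def\<close>)
  have Kys: "K (ys k) = (\<lambda>i. s * K (T (xs k)) i)" for k
    unfolding ys_def by (rule BL_apply_scale) (use KB assms l in auto)
  have "(\<lambda>k i. complex_of_real M * K (ys (r k)) i + (\<lambda>k i. 0) k i) = (\<lambda>k. K (T (xs (r k))))"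
    by (rule ext)+ (simp add: Kys mult.assoc[symmetric] Ms)
  then have "cauchy_l2 (\<lambda>k. K (T (xs (r k))))" using c by simp
  then show "\<exists>r. strict_mono r \<and> cauchy_l2 (\<lambda>k. op_mul K T (xs (r k)))" using r by auto
qed

lemma vnorm_op_adj_square_le:
  assumes "K \<in> BL" "d \<in> l2"
  shows "(vnorm (op_adj K d))^2 \<le> vnorm (K (op_adj K d)) * vnorm d"
proof -
  have "complex_of_real ((vnorm (op_adj K d))^2) = inner2 (K (op_adj K d)) d"
    using assms inner2_self[of "op_adj K d"] inner2_op_adj[OF assms(1) _ assms(2), of "op_adj K d"] by auto
  then have "(vnorm (op_adj K d))^2 = cmod (inner2 (K (op_adj K d)) d)"
    by (metis norm_of_real abs_of_nonneg zero_le_power2)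
  also have "\<dots> \<le> vnorm (K (op_adj K d)) * vnorm d" using assms by (intro inner2_Cauchy_Schwarz) auto
  finally show ?thesis .
qed

lemma compact_l2op_adj: assumes "compact_l2op K" shows "compact_l2op (op_adj K)"
proof (rule compact_l2opI)
  have KB: "K \<in> BL" using assms compact_l2op_BL by auto
  show "op_adj K \<in> BL" using KB by auto
  fix xs assume xs: "in_unit_ball xs"
  have l: "\<And>k. xs k \<in> l2" and b: "\<And>k. vnorm (xs k) \<le> 1" using xs unfolding in_unit_ball_def by auto
  have "compact_l2op (op_mul K (op_adj K))" using assms KB by (intro compact_l2op_mul_right) auto
  then obtain r where r: "strict_mono r" "cauchy_l2 (\<lambda>k. K (op_adj K (xs (r k))))"
    using compact_l2opD[OF _ xs] by fastforce
  have key: "(vnorm (\<lambda>i. op_adj K (xs a) i - op_adj K (xs b) i))^2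
      \<le> vnorm (\<lambda>i. K (op_adj K (xs a)) i - K (op_adj K (xs b)) i) * 2" for a b
  proof -
    define d where "d = (\<lambda>i. xs a i - xs b i)"
    have dl: "d \<in> l2" unfolding d_def using l by auto
    have vd: "vnorm d \<le> 2" unfolding d_def using vnorm_diff_triangle[OF l[of a] l[of b]] b[of a] b[of b] by simp
    have e1: "op_adj K d = (\<lambda>i. op_adj K (xs a) i - op_adj K (xs b) i)"
      unfolding d_def using KB l by (intro BL_apply_diff) auto
    have e2: "K (\<lambda>i. op_adj K (xs a) i - op_adj K (xs b) i) = (\<lambda>i. K (op_adj K (xs a)) i - K (op_adj K (xs b)) i)"
      using KB l by (intro BL_apply_diff) auto
    have "(vnorm (op_adj K d))^2 \<le> vnorm (K (op_adj K d)) * vnorm d"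
      using KB dl by (rule vnorm_op_adj_square_le)
    also have "\<dots> \<le> vnorm (K (op_adj K d)) * 2" using vd KB dl by (intro mult_left_mono) auto
    finally show ?thesis by (simp only: e1 e2)
  qed
  have "cauchy_l2 (\<lambda>k. op_adj K (xs (r k)))"
    unfolding cauchy_l2_def
  proof (intro allI impI)
    fix e :: real assume e: "e > 0"
    then obtain N where N: "\<forall>m\<ge>N. \<forall>n\<ge>N. vnorm (\<lambda>i. K (op_adj K (xs (r m))) i - K (op_adj K (xs (r n))) i) < e^2 / 2"
      using r(2) unfolding cauchy_l2_def by (meson half_gt_zero zero_less_power)
    have "vnorm (\<lambda>i. op_adj K (xs (r m)) i - op_adj K (xs (r n)) i) < e" if "m \<ge> N" "n \<ge> N" for m n
    proof -
      have "(vnorm (\<lambda>i. op_adj K (xs (r m)) i - op_adj K (xs (r n)) i))^2 < e^2"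
      proof -
        have "vnorm (\<lambda>i. K (op_adj K (xs (r m))) i - K (op_adj K (xs (r n))) i) < e^2 / 2"
          using N that by blast
        then show ?thesis using key[of "r m" "r n"] by linarith
      qed
      then show ?thesis using e by (simp add: power_less_imp_less_base)
    qed
    then show "\<exists>N. \<forall>m\<ge>N. \<forall>n\<ge>N. vnorm (\<lambda>i. op_adj K (xs (r m)) i - op_adj K (xs (r n)) i) < e" by blast
  qed
  then show "\<exists>r. strict_mono r \<and> cauchy_l2 (\<lambda>k. op_adj K (xs (r k)))" using r by blast
qed

\<comment> \<open>the absolute value only matters outside l2, where vnorm is a junk value\<close>
definition l2_dist :: "(nat \<Rightarrow> complex) \<Rightarrow> (nat \<Rightarrow> complex) \<Rightarrow> real" where
  "l2_dist x y = \<bar>vnorm (\<lambda>i. x i - y i)\<bar>"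

lemma vnorm_diff_commute: "vnorm (\<lambda>i. x i - y i) = vnorm (\<lambda>i. y i - x i)"
  unfolding vnorm_def by (simp add: norm_minus_commute)

lemma l2_dist_eq: "x \<in> l2 \<Longrightarrow> y \<in> l2 \<Longrightarrow> l2_dist x y = vnorm (\<lambda>i. x i - y i)"
  unfolding l2_dist_def by simp

lemma Metric_space_l2_dist: "Metric_space l2 l2_dist"
proof
  fix x y show "0 \<le> l2_dist x y" unfolding l2_dist_def by simp
  show "l2_dist x y = l2_dist y x" unfolding l2_dist_def by (metis vnorm_diff_commute)
next
  fix x y assume a: "x \<in> l2" "y \<in> l2"
  have "l2_dist x y = 0 \<longleftrightarrow> (\<lambda>i. x i - y i) = (\<lambda>i. 0)"
    using vnorm_eq_0_iff[of "\<lambda>i. x i - y i"] a by (simp add: l2_dist_eq)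
  also have "\<dots> \<longleftrightarrow> x = y" by (auto simp: fun_eq_iff)
  finally show "l2_dist x y = 0 \<longleftrightarrow> x = y" .
next
  fix x y z assume a: "x \<in> l2" "y \<in> l2" "z \<in> l2"
  have "(\<lambda>i. x i - z i) = (\<lambda>i. (x i - y i) + (y i - z i))" by (rule ext) simp
  then have "vnorm (\<lambda>i. x i - z i) \<le> vnorm (\<lambda>i. x i - y i) + vnorm (\<lambda>i. y i - z i)"
    using vnorm_triangle[of "\<lambda>i. x i - y i" "\<lambda>i. y i - z i"] a by simp
  then show "l2_dist x z \<le> l2_dist x y + l2_dist y z" using a by (simp add: l2_dist_eq)
qed

interpretation L2: Metric_space l2 l2_dist by (rule Metric_space_l2_dist)

lemma MCauchy_iff_cauchy_l2: assumes "\<And>k. \<sigma> k \<in> l2" shows "L2.MCauchy \<sigma> \<longleftrightarrow> cauchy_l2 \<sigma>"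
proof -
  have r: "range \<sigma> \<subseteq> l2" using assms by auto
  have "(\<forall>\<epsilon>>0. \<exists>N. \<forall>n n'. N \<le> n \<longrightarrow> N \<le> n' \<longrightarrow> l2_dist (\<sigma> n) (\<sigma> n') < \<epsilon>) \<longleftrightarrow> cauchy_l2 \<sigma>"
    unfolding cauchy_l2_def using assms by (simp add: l2_dist_eq)
  then show ?thesis unfolding L2.MCauchy_def using r by simp
qed

definition unit_ball_l2 :: "(nat \<Rightarrow> complex) set" where "unit_ball_l2 = {x \<in> l2. vnorm x \<le> 1}"

lemma compact_l2op_iff_totally_bounded: assumes "K \<in> BL" shows "compact_l2op K \<longleftrightarrow> L2.mtotally_bounded (K ` unit_ball_l2)"
proof
  assume c: "compact_l2op K"
  show "L2.mtotally_bounded (K ` unit_ball_l2)" unfolding L2.mtotally_bounded_sequentially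
  proof (intro conjI allI impI)
    show "K ` unit_ball_l2 \<subseteq> l2" using assms by (auto simp: unit_ball_l2_def)
    fix \<sigma> :: "nat \<Rightarrow> nat \<Rightarrow> complex" assume "range \<sigma> \<subseteq> K ` unit_ball_l2"
    then have "\<forall>k. \<exists>x. x \<in> unit_ball_l2 \<and> \<sigma> k = K x" by blast
    then obtain xs where xs: "\<And>k. xs k \<in> unit_ball_l2" "\<And>k. \<sigma> k = K (xs k)" by metis
    have "in_unit_ball xs" using xs(1) unfolding in_unit_ball_def unit_ball_l2_def by auto
    then obtain r where r: "strict_mono r" "cauchy_l2 (\<lambda>k. K (xs (r k)))" using compact_l2opD[OF c] by blast
    have e: "\<sigma> \<circ> r = (\<lambda>k. K (xs (r k)))" by (rule ext) (simp add: xs(2))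
    have "L2.MCauchy (\<lambda>k. K (xs (r k)))"
      using r(2) by (subst MCauchy_iff_cauchy_l2) (use xs assms in \<open>auto simp: unit_ball_l2_def\<close>)
    then have "L2.MCauchy (\<sigma> \<circ> r)" unfolding e .
    then show "\<exists>r. strict_mono r \<and> L2.MCauchy (\<sigma> \<circ> r)" using r(1) by blast
  qed
next
  assume tb: "L2.mtotally_bounded (K ` unit_ball_l2)"
  show "compact_l2op K"
  proof (rule compact_l2opI[OF assms])
    fix xs assume xs: "in_unit_ball xs"
    have "range (\<lambda>k. K (xs k)) \<subseteq> K ` unit_ball_l2" using xs unfolding in_unit_ball_def unit_ball_l2_def by auto
    then obtain r where r: "strict_mono r" "L2.MCauchy ((\<lambda>k. K (xs k)) \<circ> r)"
      using tb unfolding L2.mtotally_bounded_sequentially by blast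
    have "L2.MCauchy (\<lambda>k. K (xs (r k)))" using r(2) by (simp add: o_def)
    then have "cauchy_l2 (\<lambda>k. K (xs (r k)))"
      by (subst MCauchy_iff_cauchy_l2[symmetric]) (use xs assms in \<open>auto simp: in_unit_ball_def\<close>)
    then show "\<exists>r. strict_mono r \<and> cauchy_l2 (\<lambda>k. K (xs (r k)))" using r(1) by blast
  qed
qed

lemma compact_l2op_if_approx: assumes "T \<in> BL"
  "\<And>e. e > 0 \<Longrightarrow> \<exists>K. compact_l2op K \<and> (\<forall>x\<in>l2. vnorm x \<le> 1 \<longrightarrow> vnorm (\<lambda>i. K x i - T x i) \<le> e)"
  shows "compact_l2op T"
  unfolding compact_l2op_iff_totally_bounded[OF assms(1)] L2.mtotally_bounded_def
proof (intro allI impI)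
  fix \<epsilon> :: real assume \<epsilon>: "\<epsilon> > 0"
  obtain K where K: "compact_l2op K" "\<forall>x\<in>l2. vnorm x \<le> 1 \<longrightarrow> vnorm (\<lambda>i. K x i - T x i) \<le> \<epsilon>/3"
    using assms(2)[of "\<epsilon>/3"] \<epsilon> by auto
  have KB: "K \<in> BL" using K compact_l2op_BL by auto
  have "L2.mtotally_bounded (K ` unit_ball_l2)" using K(1) compact_l2op_iff_totally_bounded[OF KB] by simp
  then obtain F where F: "finite F" "F \<subseteq> K ` unit_ball_l2" "K ` unit_ball_l2 \<subseteq> (\<Union>x\<in>F. L2.mball x (\<epsilon>/3))"
    unfolding L2.mtotally_bounded_def using \<epsilon> by (meson divide_pos_pos zero_less_numeral)
  obtain G where G: "G \<subseteq> unit_ball_l2" "finite G" "F = K ` G" using finite_subset_image[OF F(1,2)] by blast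
  have "T ` unit_ball_l2 \<subseteq> (\<Union>x\<in>T ` G. L2.mball x \<epsilon>)"
  proof
    fix y assume "y \<in> T ` unit_ball_l2"
    then obtain x where x: "x \<in> unit_ball_l2" "y = T x" by blast
    have xl: "x \<in> l2" "vnorm x \<le> 1" using x by (auto simp: unit_ball_l2_def)
    obtain g where g: "g \<in> G" "K x \<in> L2.mball (K g) (\<epsilon>/3)" using F(3) G(3) x(1) by blast
    have gl: "g \<in> l2" "vnorm g \<le> 1" using g G by (auto simp: unit_ball_l2_def)
    have "l2_dist (T g) (T x) \<le> l2_dist (T g) (K g) + l2_dist (K g) (T x)"
      using assms KB xl gl by (intro L2.triangle) auto
    also have "\<dots> \<le> l2_dist (T g) (K g) + (l2_dist (K g) (K x) + l2_dist (K x) (T x))"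
      using assms KB xl gl by (intro add_left_mono L2.triangle) auto
    also have "l2_dist (T g) (K g) \<le> \<epsilon>/3"
      using K(2) gl assms KB by (simp add: l2_dist_eq vnorm_diff_commute[of "T g"])
    also have "l2_dist (K x) (T x) \<le> \<epsilon>/3" using K(2) xl assms KB by (simp add: l2_dist_eq)
    also have "l2_dist (K g) (K x) < \<epsilon>/3" using g(2) by simp
    finally have "l2_dist (T g) (T x) < \<epsilon>" by simp
    then show "y \<in> (\<Union>x\<in>T ` G. L2.mball x \<epsilon>)" using g(1) x assms xl gl by auto
  qed
  moreover have "finite (T ` G)" using G by simp
  moreover have "T ` G \<subseteq> T ` unit_ball_l2" using G by auto
  ultimately show "\<exists>K. finite K \<and> K \<subseteq> T ` unit_ball_l2 \<and> T ` unit_ball_l2 \<subseteq> (\<Union>x\<in>K. L2.mball x \<epsilon>)" by blast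
qed

section \<open>The Calkin algebra\<close>

abbreviation op_diff :: "l2op \<Rightarrow> l2op \<Rightarrow> l2op" where "op_diff T S \<equiv> op_add T (op_scale (-1) S)"

lemma compact_l2op_diff: "compact_l2op K1 \<Longrightarrow> compact_l2op K2 \<Longrightarrow> compact_l2op (op_diff K1 K2)"
  by (intro compact_l2op_add compact_l2op_scale)

lemma mem_calkin_iff: "S \<in> calkin T \<longleftrightarrow> S \<in> BL \<and> compact_l2op (op_diff S T)"
  unfolding calkin_def by simp

lemma calkin_self: assumes "T \<in> BL" shows "T \<in> calkin T"
proof -
  have "op_diff T T = op_zero" by (rule ext) simp
  then show ?thesis using assms by (simp add: mem_calkin_iff)
qed

lemma op_diff_swap: "op_diff S T = op_scale (-1) (op_diff T S)"
  by (rule ext) (simp add: algebra_simps)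

lemma op_diff_trans: "op_diff U T = op_add (op_diff U S) (op_diff S T)"
  by (rule ext) (simp add: algebra_simps)

lemma compact_l2op_diff_swap: "compact_l2op (op_diff T S) \<Longrightarrow> compact_l2op (op_diff S T)"
  by (subst op_diff_swap) (rule compact_l2op_scale)

lemma calkin_eq_iff: assumes "S \<in> BL" "T \<in> BL"
  shows "calkin S = calkin T \<longleftrightarrow> compact_l2op (op_diff S T)"
proof
  assume "calkin S = calkin T"
  then show "compact_l2op (op_diff S T)" using calkin_self[OF assms(1)] by (simp add: mem_calkin_iff)
next
  assume c: "compact_l2op (op_diff S T)"
  show "calkin S = calkin T"
  proof (rule set_eqI)
    fix U
    have "compact_l2op (op_diff U S) \<longleftrightarrow> compact_l2op (op_diff U T)"
    proof
      assume "compact_l2op (op_diff U S)"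
      then show "compact_l2op (op_diff U T)" using c by (subst op_diff_trans[of U T S]) (rule compact_l2op_add)
    next
      assume "compact_l2op (op_diff U T)"
      then show "compact_l2op (op_diff U S)" using compact_l2op_diff_swap[OF c]
        by (subst op_diff_trans[of U S T]) (rule compact_l2op_add)
    qed
    then show "U \<in> calkin S \<longleftrightarrow> U \<in> calkin T" by (simp add: mem_calkin_iff)
  qed
qed

lemma rep_calkin: assumes "T \<in> BL" shows "rep (calkin T) \<in> BL" "compact_l2op (op_diff (rep (calkin T)) T)"
proof -
  have "rep (calkin T) \<in> calkin T" unfolding rep_def by (rule someI[of "\<lambda>S. S \<in> calkin T", OF calkin_self[OF assms]])
  then show "rep (calkin T) \<in> BL" "compact_l2op (op_diff (rep (calkin T)) T)" by (auto simp: mem_calkin_iff)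
qed

lemma QC_rep: assumes "a \<in> QC" shows "rep a \<in> BL" "calkin (rep a) = a"
proof -
  obtain T where T: "T \<in> BL" "a = calkin T" using assms unfolding QC_def by blast
  show "rep a \<in> BL" using rep_calkin[OF T(1)] T(2) by simp
  show "calkin (rep a) = a" using rep_calkin[OF T(1)] T by (simp add: calkin_eq_iff)
qed

lemma calkin_in_QC[simp,intro]: "T \<in> BL \<Longrightarrow> calkin T \<in> QC"
  unfolding QC_def by blast

lemma q_add_calkin: assumes "T \<in> BL" "S \<in> BL" shows "q_add (calkin T) (calkin S) = calkin (op_add T S)"
proof -
  let ?T = "rep (calkin T)" and ?S = "rep (calkin S)"
  have "op_diff (op_add ?T ?S) (op_add T S) = op_add (op_diff ?T T) (op_diff ?S S)" by (rule ext) (simp add: algebra_simps)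
  then have "compact_l2op (op_diff (op_add ?T ?S) (op_add T S))"
    using rep_calkin[OF assms(1)] rep_calkin[OF assms(2)] by (simp add: compact_l2op_add)
  then show ?thesis unfolding q_add_def using rep_calkin assms by (subst calkin_eq_iff) auto
qed

lemma q_scale_calkin: assumes "T \<in> BL" shows "q_scale c (calkin T) = calkin (op_scale c T)"
proof -
  let ?T = "rep (calkin T)"
  have "op_diff (op_scale c ?T) (op_scale c T) = op_scale c (op_diff ?T T)" by (rule ext) (simp add: algebra_simps)
  then have "compact_l2op (op_diff (op_scale c ?T) (op_scale c T))"
    using rep_calkin[OF assms(1)] by (simp add: compact_l2op_scale)
  then show ?thesis unfolding q_scale_def using rep_calkin assms by (subst calkin_eq_iff) auto
qed

lemma q_mul_calkin: assumes "T \<in> BL" "S \<in> BL" shows "q_mul (calkin T) (calkin S) = calkin (op_mul T S)"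
proof -
  let ?T = "rep (calkin T)" and ?S = "rep (calkin S)"
  have TB: "?T \<in> BL" and SB: "?S \<in> BL" using rep_calkin assms by auto
  have "op_diff (op_mul ?T ?S) (op_mul T S) = op_add (op_mul ?T (op_diff ?S S)) (op_mul (op_diff ?T T) S)"
  proof -
    have "op_mul ?T (op_diff ?S S) = op_add (op_mul ?T ?S) (op_scale (-1) (op_mul ?T S))"
      using TB SB assms by (simp add: op_mul_add_right op_mul_scale_right)
    then show ?thesis by (simp add: fun_eq_iff algebra_simps)
  qed
  moreover have "compact_l2op (op_mul ?T (op_diff ?S S))" using TB rep_calkin[OF assms(2)] by (intro compact_l2op_mul_left)
  moreover have "compact_l2op (op_mul (op_diff ?T T) S)" using assms rep_calkin[OF assms(1)] by (intro compact_l2op_mul_right)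
  ultimately have "compact_l2op (op_diff (op_mul ?T ?S) (op_mul T S))" by (simp add: compact_l2op_add)
  then show ?thesis unfolding q_mul_def using TB SB assms by (subst calkin_eq_iff) auto
qed

lemma q_adj_calkin: assumes "T \<in> BL" shows "q_adj (calkin T) = calkin (op_adj T)"
proof -
  let ?T = "rep (calkin T)"
  have TB: "?T \<in> BL" using rep_calkin assms by auto
  have "op_diff (op_adj ?T) (op_adj T) = op_adj (op_diff ?T T)"
    using TB assms by (simp add: op_adj_add op_adj_scale)
  then have "compact_l2op (op_diff (op_adj ?T) (op_adj T))"
    using rep_calkin[OF assms(1)] by (simp add: compact_l2op_adj)
  then show ?thesis unfolding q_adj_def using TB assms by (subst calkin_eq_iff) auto
qed

lemma calkin_nonempty: "T \<in> BL \<Longrightarrow> calkin T \<noteq> {}"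
  using calkin_self by blast

lemma q_norm_le_op_norm: assumes "S \<in> calkin T" shows "q_norm (calkin T) \<le> op_norm S"
  unfolding q_norm_def
proof (rule cInf_lower)
  show "op_norm S \<in> op_norm ` calkin T" using assms by simp
  show "bdd_below (op_norm ` calkin T)" unfolding bdd_below_def
    by (rule exI[of _ 0]) (auto simp: mem_calkin_iff)
qed

lemma q_norm_greatest: assumes "T \<in> BL" "\<And>S. S \<in> calkin T \<Longrightarrow> c \<le> op_norm S" shows "c \<le> q_norm (calkin T)"
  unfolding q_norm_def using assms calkin_nonempty[OF assms(1)] by (intro cInf_greatest) auto

lemma q_norm_less_obtain: assumes "T \<in> BL" "q_norm (calkin T) < e" shows "\<exists>S\<in>calkin T. op_norm S < e"
proof -
  have "Inf (op_norm ` calkin T) < e" using assms(2) unfolding q_norm_def .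
  then obtain y where "y \<in> op_norm ` calkin T" "y < e"
    using cInf_lessD[of "op_norm ` calkin T" e] calkin_nonempty[OF assms(1)] by blast
  then show ?thesis by blast
qed

lemma compact_l2op_if_q_norm_le_0: assumes "T \<in> BL" "q_norm (calkin T) \<le> 0" shows "compact_l2op T"
proof (rule compact_l2op_if_approx[OF assms(1)])
  fix e :: real assume e: "e > 0"
  then have "q_norm (calkin T) < e" using assms(2) by linarith
  then obtain S where S: "S \<in> calkin T" "op_norm S < e" using q_norm_less_obtain[OF assms(1)] by blast
  have SB: "S \<in> BL" and cS: "compact_l2op (op_diff S T)" using S by (auto simp: mem_calkin_iff)
  have "compact_l2op (op_diff T S)" using cS by (rule compact_l2op_diff_swap)
  moreover have "vnorm (\<lambda>i. op_diff T S x i - T x i) \<le> e" if "x \<in> l2" "vnorm x \<le> 1" for x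
  proof -
    have "(\<lambda>i. op_diff T S x i - T x i) = (\<lambda>i. (-1) * S x i)" by (rule ext) simp
    then have "vnorm (\<lambda>i. op_diff T S x i - T x i) = vnorm (S x)" using vnorm_scale[of "S x" "-1"] SB that by simp
    also have "\<dots> \<le> op_norm S * vnorm x" using SB that by (intro op_norm_bound)
    also have "\<dots> \<le> op_norm S * 1" using SB that by (intro mult_left_mono) auto
    finally show ?thesis using S(2) by simp
  qed
  ultimately show "\<exists>K. compact_l2op K \<and> (\<forall>x\<in>l2. vnorm x \<le> 1 \<longrightarrow> vnorm (\<lambda>i. K x i - T x i) \<le> e)" by blast
qed

section \<open>Commutators\<close>

abbreviation op_commutator :: "l2op \<Rightarrow> l2op \<Rightarrow> l2op" where
  "op_commutator S T \<equiv> op_diff (op_mul S T) (op_mul T S)"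

lemma vnorm_commutator_le: assumes "A \<in> BL" "B \<in> BL" "x \<in> l2"
  shows "vnorm (op_commutator A B x) \<le> 2 * op_norm A * op_norm B * vnorm x"
proof -
  have "vnorm (op_commutator A B x) = vnorm (\<lambda>n. A (B x) n - B (A x) n)" by simp
  also have "\<dots> \<le> vnorm (A (B x)) + vnorm (B (A x))" using assms by (intro vnorm_diff_triangle) auto
  also have "vnorm (A (B x)) \<le> op_norm A * vnorm (B x)" using assms by (intro op_norm_bound) auto
  also have "\<dots> \<le> op_norm A * (op_norm B * vnorm x)" using assms by (intro mult_left_mono op_norm_bound) auto
  also have "vnorm (B (A x)) \<le> op_norm B * vnorm (A x)" using assms by (intro op_norm_bound) auto
  also have "\<dots> \<le> op_norm B * (op_norm A * vnorm x)" using assms by (intro mult_left_mono op_norm_bound) auto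
  finally show ?thesis by (simp add: algebra_simps)
qed

lemma commute_limit_BL: assumes aB: "a \<in> BL" and mB: "m \<in> BL" and XB: "\<And>k. X k \<in> BL"
  and comm: "\<And>k. op_mul (X k) m = op_mul m (X k)"
  and lim: "(\<lambda>k. op_norm (op_diff (X k) a)) \<longlonglongrightarrow> 0"
  shows "op_mul a m = op_mul m a"
proof (rule op_eqI)
  fix x assume x: "x \<in> l2"
  define E where "E = op_diff (op_mul a m) (op_mul m a)"
  have bound: "vnorm (E x) \<le> (2 * op_norm m * vnorm x) * op_norm (op_diff (X k) a)" for k
  proof -
    define D where "D = op_diff (X k) a"
    have DB: "D \<in> BL" unfolding D_def using aB XB by auto
    have Dy: "D y = (\<lambda>n. X k y n - a y n)" for y unfolding D_def by (simp add: fun_eq_iff)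
    have c: "m (X k x) = X k (m x)" using fun_cong[OF comm[of k], of x] by simp
    have Ex: "E x = op_diff (op_mul m D) (op_mul D m) x"
    proof -
      have "m (D x) = (\<lambda>n. m (X k x) n - m (a x) n)" unfolding Dy using mB aB XB x by (intro BL_apply_diff) auto
      then show ?thesis unfolding E_def using c by (simp add: Dy fun_eq_iff algebra_simps)
    qed
    have "vnorm (E x) \<le> 2 * op_norm m * op_norm D * vnorm x"
      unfolding Ex by (rule vnorm_commutator_le[OF mB DB x])
    then show ?thesis unfolding D_def by (simp add: algebra_simps)
  qed
  have "(\<lambda>k. (2 * op_norm m * vnorm x) * op_norm (op_diff (X k) a)) \<longlonglongrightarrow> (2 * op_norm m * vnorm x) * 0"
    by (intro tendsto_mult tendsto_const lim)
  then have "vnorm (E x) \<le> (2 * op_norm m * vnorm x) * 0"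
    by (rule LIMSEQ_le_const) (use bound in blast)
  moreover have "E \<in> BL" unfolding E_def using aB mB by auto
  ultimately have "E x = (\<lambda>n. 0)" using x by (intro vnorm_le_0_imp_zero) auto
  then show "op_mul a m x = op_mul m a x" unfolding E_def by (simp add: fun_eq_iff)
next
  fix x assume "x \<notin> l2" then show "op_mul a m x = op_mul m a x" using aB mB by (simp add: BL_outside)
qed

lemma op_norm_commutator_le:
  assumes "S \<in> BL" "T \<in> BL" shows "op_norm (op_commutator S T) \<le> 2 * op_norm S * op_norm T"
  using assms by (intro op_norm_least vnorm_commutator_le) auto

lemma op_commutator_diff_left:
  assumes "A \<in> BL" "B \<in> BL" "T \<in> BL"
  shows "op_commutator (op_diff A B) T = op_diff (op_commutator A T) (op_commutator B T)"
proof (rule op_eqI)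
  fix x assume "x \<in> l2"
  then have "T (\<lambda>n. A x n + - B x n) = (\<lambda>n. T (A x) n - T (B x) n)"
    using assms BL_apply_diff[of T "A x" "B x"] by simp
  then show "op_commutator (op_diff A B) T x = op_diff (op_commutator A T) (op_commutator B T) x"
    by (simp add: fun_eq_iff)
qed (use assms in \<open>simp add: BL_outside\<close>)

lemma q_mul_calkin_commute_iff:
  assumes "S \<in> BL" "T \<in> BL"
  shows "q_mul (calkin S) (calkin T) = q_mul (calkin T) (calkin S) \<longleftrightarrow> compact_l2op (op_commutator S T)"
  using assms by (simp add: q_mul_calkin calkin_eq_iff)

lemma q_norm_commutator_le:
  assumes D: "D \<in> BL" and T: "T \<in> BL"
  shows "q_norm (calkin (op_commutator D T)) \<le> 2 * op_norm T * q_norm (calkin D)"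
proof -
  have bound: "q_norm (calkin (op_commutator D T)) \<le> 2 * op_norm T * op_norm S" if S: "S \<in> calkin D" for S
  proof -
    have SB: "S \<in> BL" and "compact_l2op (op_diff S D)" using S by (auto simp: mem_calkin_iff)
    then have "compact_l2op (op_diff (op_commutator S T) (op_commutator D T))"
      using D T by (simp add: op_commutator_diff_left[symmetric] compact_l2op_diff
          compact_l2op_mul_left compact_l2op_mul_right)
    then have "op_commutator S T \<in> calkin (op_commutator D T)"
      using SB T by (simp add: mem_calkin_iff)
    then have "q_norm (calkin (op_commutator D T)) \<le> op_norm (op_commutator S T)"
      by (rule q_norm_le_op_norm)
    also have "\<dots> \<le> 2 * op_norm T * op_norm S"
      using op_norm_commutator_le[OF SB T] by (simp add: algebra_simps)
    finally show ?thesis .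
  qed
  show ?thesis
  proof (cases "op_norm T = 0")
    case True
    then show ?thesis using bound[OF calkin_self[OF D]] by simp
  next
    case False
    then have pos: "2 * op_norm T > 0" using op_norm_nonneg[OF T] by linarith
    have "q_norm (calkin (op_commutator D T)) / (2 * op_norm T) \<le> q_norm (calkin D)"
      using D by (rule q_norm_greatest) (use bound pos in \<open>simp add: divide_le_eq algebra_simps\<close>)
    then show ?thesis using pos by (simp add: divide_le_eq algebra_simps)
  qed
qed

lemma compact_commutator_limit:
  assumes A: "A \<in> BL" and T: "T \<in> BL" and X: "\<And>k. X k \<in> BL"
    and comm: "\<And>k. compact_l2op (op_commutator (X k) T)"
    and lim: "(\<lambda>k. q_norm (calkin (op_diff (X k) A))) \<longlonglongrightarrow> 0"
  shows "compact_l2op (op_commutator A T)"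
proof -
  have bound: "q_norm (calkin (op_commutator T A)) \<le> 2 * op_norm T * q_norm (calkin (op_diff (X k) A))"
    for k
  proof -
    have "op_diff (op_commutator (op_diff (X k) A) T) (op_commutator T A) = op_commutator (X k) T"
      unfolding op_commutator_diff_left[OF X A T] by (simp add: fun_eq_iff)
    then have "calkin (op_commutator (op_diff (X k) A) T) = calkin (op_commutator T A)"
      using A T X comm by (simp add: calkin_eq_iff)
    then show ?thesis using q_norm_commutator_le[of "op_diff (X k) A" T] A T X by simp
  qed
  have "(\<lambda>k. 2 * op_norm T * q_norm (calkin (op_diff (X k) A))) \<longlonglongrightarrow> 2 * op_norm T * 0"
    by (intro tendsto_mult tendsto_const lim)
  then have "q_norm (calkin (op_commutator T A)) \<le> 2 * op_norm T * 0"
    by (rule LIMSEQ_le_const) (use bound in blast)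
  then have "compact_l2op (op_commutator T A)" using A T by (intro compact_l2op_if_q_norm_le_0) auto
  then show ?thesis by (rule compact_l2op_diff_swap)
qed

section \<open>Masas of B(l2) and of the Calkin algebra\<close>

interpretation BL: star_algebra BL op_zero op_add op_scale op_mul op_adj op_norm
proof unfold_locales
  fix X a b assume "\<And>k. X k \<in> BL" "a \<in> BL" "b \<in> BL" "\<And>k. op_mul (X k) b = op_mul b (X k)"
    "(\<lambda>k. op_norm (op_diff (X k) a)) \<longlonglongrightarrow> 0"
  then show "op_mul a b = op_mul b a" by (metis commute_limit_BL)
qed (simp_all add: op_mul_add_left op_mul_add_right op_mul_scale_left op_mul_scale_right
       op_mul_assoc op_adj_mul)

interpretation Q: star_algebra QC q_zero q_add q_scale q_mul q_adj q_norm
proof unfold_locales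
  fix X a b assume X: "\<And>k. X k \<in> QC" and ab: "a \<in> QC" "b \<in> QC"
    and comm: "\<And>k. q_mul (X k) b = q_mul b (X k)"
    and lim: "(\<lambda>k. q_norm (q_add (X k) (q_scale (-1) a))) \<longlonglongrightarrow> 0"
  have X': "rep (X k) \<in> BL" "calkin (rep (X k)) = X k" for k using QC_rep[OF X] by auto
  obtain A B where AB: "A \<in> BL" "a = calkin A" "B \<in> BL" "b = calkin B" using ab unfolding QC_def by blast
  have "compact_l2op (op_commutator (rep (X k)) B)" for k
    using comm[of k] X' AB by (metis q_mul_calkin_commute_iff)
  moreover have "q_add (X k) (q_scale (-1) a) = calkin (op_diff (rep (X k)) A)" for k
    using AB X'(1)[of k] q_add_calkin q_scale_calkin by (subst X'(2)[of k, symmetric]) simp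
  then have "(\<lambda>k. q_norm (calkin (op_diff (rep (X k)) A))) \<longlonglongrightarrow> 0" using lim by simp
  ultimately have "compact_l2op (op_commutator A B)"
    using compact_commutator_limit[of A B "\<lambda>k. rep (X k)"] AB X' by blast
  then show "q_mul a b = q_mul b a" using AB by (simp add: q_mul_calkin_commute_iff)
qed (auto simp: QC_def q_zero_def q_add_calkin q_scale_calkin q_mul_calkin q_adj_calkin
       op_mul_add_left op_mul_add_right op_mul_scale_left op_mul_scale_right op_mul_assoc op_adj_mul)

lemma comm_star_set_calkin_image:
  assumes "BL.comm_star_set M" shows "Q.comm_star_set (calkin ` M)"
  using assms unfolding BL.comm_star_set_def Q.comm_star_set_def
  by (auto simp: q_adj_calkin q_mul_calkin subset_iff)

theorem lemma2p15:
  assumes "masa_Q A"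
    and "has_commutative_lift A"
  shows "\<exists>B'. masa_B B' \<and> calkin ` B' = A"
proof -
  obtain B where B: "comm_subalg_B B" "calkin ` B = A"
    using assms(2) unfolding has_commutative_lift_def by blast
  obtain M where M: "masa_B M" "B \<subseteq> M"
    using BL.comm_cstar_subalg_extends_to_masa[OF B(1)] by blast
  have "Q.comm_star_set (calkin ` M)"
    using M(1) by (intro comm_star_set_calkin_image BL.comm_cstar_subalg_imp_comm_star_set)
      (simp add: masa_def)
  moreover have "A \<subseteq> calkin ` M" using B(2) M(2) by blast
  ultimately have "calkin ` M = A" using assms(1) by (intro Q.masa_eq_comm_star_superset)
  then show ?thesis using M(1) by blast
qed

end
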